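(* Let $H$ be a complex Hilbert space, let $a$ be a compact self-adjoint operator in $K(H)$, and let $\Delta:K(H)\to K(H)$ be a weak-2-local derivation. Then $\Delta|_{K(H)_a}:K(H)_a\to K(H)$ is a continuous linear derivation (with $K(H)$ regarded as a $K(H)_a$-bimodule), where $K(H)_a$ is the C$^*$-subalgebra of $K(H)$ generated by $a$. Furthermore, if $\mathcal{B}$ denotes the commutative C$^*$-subalgebra of $K(H)$ generated by an at most countable family $(p_n)$ of mutually orthogonal minimal projections in $K(H)$, then $\Delta|_{\mathcal{B}}:\mathcal{B}\to K(H)$ is a continuous linear derivation.
   Context: $K(H)$ is the C$^*$-algebra of compact operators on $H$. For a subalgebra $C\subseteq K(H)$, a derivation $C\to K(H)$ is a linear map $D$ with $D(xy)=D(x)y+xD(y)$ for $x,y\in C$. A derivation on a C$^*$-algebra $A$ is a linear map $D:A\to A$ with $D(ab)=D(a)b+aD(b)$. A (not necessarily linear) map $\Delta:A\to A$ is a weak-2-local derivation if for every $a,b\in A$ and every $\phi\in A^*$ there exists a derivation $D_{a,b,\phi}:A\to A$ such that $\phi\Delta(a)=\phi D_{a,b,\phi}(a)$ and $\phi\Delta(b)=\phi D_{a,b,\phi}(b)$. *)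

theory Defs
  imports "HOL-Analysis.Analysis" "HOL-Library.Countable_Set"
begin

class complex_vector = real_vector +
  fixes scaleC :: "complex \<Rightarrow> 'a \<Rightarrow> 'a"  (infixr \<open>*\<^sub>C\<close> 75)
  assumes scaleC_add_right: "c *\<^sub>C (x + y) = c *\<^sub>C x + c *\<^sub>C y"
    and scaleC_add_left: "(b + c) *\<^sub>C x = b *\<^sub>C x + c *\<^sub>C x"
    and scaleC_scaleC: "b *\<^sub>C (c *\<^sub>C x) = (b * c) *\<^sub>C x"
    and scaleC_one: "1 *\<^sub>C x = x"
    and scaleC_of_real: "complex_of_real r *\<^sub>C x = r *\<^sub>R x"

class complex_normed_vector = complex_vector + real_normed_vector +
  assumes norm_scaleC: "norm (c *\<^sub>C x) = cmod c * norm x"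

class complex_inner = complex_normed_vector +
  fixes cinner :: "'a \<Rightarrow> 'a \<Rightarrow> complex"
  assumes cinner_commute: "cinner x y = cnj (cinner y x)"
    and cinner_add_left: "cinner (x + y) z = cinner x z + cinner y z"
    and cinner_scaleC_left: "cinner (c *\<^sub>C x) y = cnj c * cinner x y"
    and cinner_self_real: "Im (cinner x x) = 0"
    and cinner_self_nonneg: "0 \<le> Re (cinner x x)"
    and norm_eq_sqrt_cinner: "norm x = sqrt (Re (cinner x x))"

class chilbert_space = complex_inner + complete_space

text \<open>Operators are functions H \<Rightarrow> H; algebra operations are pointwise sum,
  scalar multiple and composition; the norm is the operator norm onorm.\<close>

definition clinear :: "('a::complex_vector \<Rightarrow> 'a) \<Rightarrow> bool" where
  "clinear T \<longleftrightarrow> (\<forall>x y. T (x + y) = T x + T y) \<and> (\<forall>c x. T (c *\<^sub>C x) = c *\<^sub>C T x)"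

definition opadd :: "('a::complex_vector \<Rightarrow> 'a) \<Rightarrow> ('a \<Rightarrow> 'a) \<Rightarrow> 'a \<Rightarrow> 'a" where
  "opadd S T = (\<lambda>v. S v + T v)"

definition opsub :: "('a::complex_vector \<Rightarrow> 'a) \<Rightarrow> ('a \<Rightarrow> 'a) \<Rightarrow> 'a \<Rightarrow> 'a" where
  "opsub S T = (\<lambda>v. S v - T v)"

definition opscale :: "complex \<Rightarrow> ('a::complex_vector \<Rightarrow> 'a) \<Rightarrow> 'a \<Rightarrow> 'a" where
  "opscale c T = (\<lambda>v. c *\<^sub>C T v)"

definition compact_op :: "('a::complex_normed_vector \<Rightarrow> 'a) \<Rightarrow> bool" where
  "compact_op T \<longleftrightarrow> clinear T \<and> compact (closure (T ` ball 0 1))"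

definition KH :: "('a::chilbert_space \<Rightarrow> 'a) set" where
  "KH = {T. compact_op T}"

definition is_adjoint :: "('a::complex_inner \<Rightarrow> 'a) \<Rightarrow> ('a \<Rightarrow> 'a) \<Rightarrow> bool" where
  "is_adjoint S T \<longleftrightarrow> (\<forall>u v. cinner (T u) v = cinner u (S v))"

definition self_adjoint :: "('a::complex_inner \<Rightarrow> 'a) \<Rightarrow> bool" where
  "self_adjoint T \<longleftrightarrow> is_adjoint T T"

definition lin_on :: "('a::chilbert_space \<Rightarrow> 'a) set \<Rightarrow> (('a \<Rightarrow> 'a) \<Rightarrow> ('a \<Rightarrow> 'a)) \<Rightarrow> bool" where
  "lin_on C D \<longleftrightarrow> (\<forall>x\<in>C. \<forall>y\<in>C. D (opadd x y) = opadd (D x) (D y))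
                 \<and> (\<forall>c. \<forall>x\<in>C. D (opscale c x) = opscale c (D x))"

definition derivation_into_KH :: "('a::chilbert_space \<Rightarrow> 'a) set \<Rightarrow> (('a \<Rightarrow> 'a) \<Rightarrow> ('a \<Rightarrow> 'a)) \<Rightarrow> bool" where
  "derivation_into_KH C D \<longleftrightarrow> (\<forall>x\<in>C. D x \<in> KH) \<and> lin_on C D
     \<and> (\<forall>x\<in>C. \<forall>y\<in>C. D (x \<circ> y) = opadd (D x \<circ> y) (x \<circ> D y))"

definition derivation_KH :: "(('a::chilbert_space \<Rightarrow> 'a) \<Rightarrow> ('a \<Rightarrow> 'a)) \<Rightarrow> bool" where
  "derivation_KH D \<longleftrightarrow> derivation_into_KH KH D"

definition cont_on_ops :: "('a::chilbert_space \<Rightarrow> 'a) set \<Rightarrow> (('a \<Rightarrow> 'a) \<Rightarrow> ('a \<Rightarrow> 'a)) \<Rightarrow> bool" where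
  "cont_on_ops C D \<longleftrightarrow> (\<forall>xs x. (\<forall>n. xs n \<in> C) \<and> x \<in> C \<and>
       (\<lambda>n. onorm (opsub (xs n) x)) \<longlonglongrightarrow> 0 \<longrightarrow>
       (\<lambda>n. onorm (opsub (D (xs n)) (D x))) \<longlonglongrightarrow> 0)"

definition dual_KH :: "((('a::chilbert_space) \<Rightarrow> 'a) \<Rightarrow> complex) set" where
  "dual_KH = {\<phi>. (\<forall>x\<in>KH. \<forall>y\<in>KH. \<phi> (opadd x y) = \<phi> x + \<phi> y)
                 \<and> (\<forall>c. \<forall>x\<in>KH. \<phi> (opscale c x) = c * \<phi> x)
                 \<and> (\<exists>M. \<forall>x\<in>KH. cmod (\<phi> x) \<le> M * onorm x)}"

definition weak_2_local_derivation :: "(('a::chilbert_space \<Rightarrow> 'a) \<Rightarrow> ('a \<Rightarrow> 'a)) \<Rightarrow> bool" where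
  "weak_2_local_derivation \<Delta> \<longleftrightarrow> (\<forall>x\<in>KH. \<Delta> x \<in> KH) \<and>
     (\<forall>a\<in>KH. \<forall>b\<in>KH. \<forall>\<phi>\<in>dual_KH. \<exists>D. derivation_KH D \<and>
         \<phi> (\<Delta> a) = \<phi> (D a) \<and> \<phi> (\<Delta> b) = \<phi> (D b))"

definition cstar_subalg :: "('a::chilbert_space \<Rightarrow> 'a) set \<Rightarrow> bool" where
  "cstar_subalg S \<longleftrightarrow> S \<subseteq> KH
     \<and> (\<forall>x\<in>S. \<forall>y\<in>S. opadd x y \<in> S \<and> x \<circ> y \<in> S)
     \<and> (\<forall>c. \<forall>x\<in>S. opscale c x \<in> S)
     \<and> (\<forall>x\<in>S. \<exists>y\<in>S. is_adjoint y x)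
     \<and> (\<forall>xs x. (\<forall>n. xs n \<in> S) \<and> x \<in> KH \<and> (\<lambda>n. onorm (opsub (xs n) x)) \<longlonglongrightarrow> 0 \<longrightarrow> x \<in> S)"

definition cstar_gen :: "('a::chilbert_space \<Rightarrow> 'a) set \<Rightarrow> ('a \<Rightarrow> 'a) set" where
  "cstar_gen G = \<Inter>{S. cstar_subalg S \<and> G \<subseteq> S}"

definition projection_KH :: "('a::chilbert_space \<Rightarrow> 'a) \<Rightarrow> bool" where
  "projection_KH p \<longleftrightarrow> p \<in> KH \<and> p \<circ> p = p \<and> self_adjoint p"

definition minimal_projection_KH :: "('a::chilbert_space \<Rightarrow> 'a) \<Rightarrow> bool" where
  "minimal_projection_KH p \<longleftrightarrow> projection_KH p \<and> p \<noteq> (\<lambda>_. 0) \<and>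
     (\<forall>q. projection_KH q \<and> q \<circ> p = q \<longrightarrow> q = (\<lambda>_. 0) \<or> q = p)"

definition cont_lin_derivation_on :: "('a::chilbert_space \<Rightarrow> 'a) set \<Rightarrow> (('a \<Rightarrow> 'a) \<Rightarrow> ('a \<Rightarrow> 'a)) \<Rightarrow> bool" where
  "cont_lin_derivation_on C D \<longleftrightarrow> derivation_into_KH C D \<and> cont_on_ops C D"

end

theory Submission
  imports Defs
begin

text \<open>Let \<open>E\<close> be a total set of vectors and let \<open>diag_alg E\<close> consist of the compact operators
  that, together with a compact adjoint, have every vector of \<open>E\<close> as an eigenvector; this is a
  C*-subalgebra of \<open>K(H)\<close>. For \<open>x\<close> in it and \<open>e, w \<in> E\<close>, testing \<open>\<Delta>\<close> against the functional
  \<open>z \<mapsto> \<langle>w, z e\<rangle>\<close> with a derivation that agrees with \<open>\<Delta>\<close> at \<open>x\<close> and at the projection onto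
  \<open>e\<close> gives \<open>\<langle>w, \<Delta>(x) e\<rangle> = (\<lambda>\<^sub>e(x) - \<lambda>\<^sub>w(x)) c\<^sub>e\<^sub>w\<close>, where \<open>\<lambda>\<^sub>e(x)\<close> is the eigenvalue
  and \<open>c\<^sub>e\<^sub>w\<close> does not depend on \<open>x\<close>. This expression is linear and satisfies the Leibniz rule in
  \<open>x\<close>, so \<open>\<Delta>\<close> is a derivation on \<open>diag_alg E\<close>. The same formula shows that the sets
  \<open>{x. \<parallel>\<Delta> x\<parallel> \<le> k}\<close> are closed, so by Baire's theorem one of them has interior, and linearity
  turns this into boundedness. Finally, \<open>a\<close> lies in \<open>diag_alg E\<close> for \<open>E\<close> the eigenvectors of \<open>a\<close>
  (total by the spectral theorem for compact self-adjoint operators), and mutually orthogonal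
  projections lie in \<open>diag_alg E\<close> for \<open>E\<close> the union of their ranges and their common kernel.\<close>

section \<open>Complex inner product spaces\<close>

lemma scaleC_zero_left [simp]: "(0::complex) *\<^sub>C (x::'a::complex_vector) = 0"
  using scaleC_of_real[of 0 x] by simp

lemma scaleC_zero_right [simp]: "c *\<^sub>C (0::'a::complex_vector) = 0"
  using scaleC_add_right[of c 0 0] by simp

lemma scaleC_minus_left: "(- c) *\<^sub>C (x::'a::complex_vector) = - (c *\<^sub>C x)"
  using scaleC_add_left[of c "-c" x] by (simp add: add_eq_0_iff)

lemma scaleC_minus1: "(-1) *\<^sub>C (x::'a::complex_vector) = - x"
  by (simp add: scaleC_minus_left scaleC_one)

lemma bounded_linear_scaleC_right: "bounded_linear (\<lambda>x::'a::complex_normed_vector. c *\<^sub>C x)"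
proof (rule bounded_linear_intro[where K="cmod c"])
  show "c *\<^sub>C (x + y) = c *\<^sub>C x + c *\<^sub>C y" for x y :: 'a by (rule scaleC_add_right)
  show "c *\<^sub>C (r *\<^sub>R x) = r *\<^sub>R (c *\<^sub>C x)" for r and x :: 'a
    by (metis mult.commute scaleC_of_real scaleC_scaleC)
  show "norm (c *\<^sub>C x) \<le> norm x * cmod c" for x :: 'a by (simp add: norm_scaleC)
qed

lemma bounded_linear_scaleC_left: "bounded_linear (\<lambda>c::complex. c *\<^sub>C (w::'a::complex_normed_vector))"
proof (rule bounded_linear_intro[where K="norm w"])
  show "(x + y) *\<^sub>C w = x *\<^sub>C w + y *\<^sub>C w" for x y by (rule scaleC_add_left)
  show "(r *\<^sub>R x) *\<^sub>C w = r *\<^sub>R (x *\<^sub>C w)" for r x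
    by (metis scaleC_of_real scaleC_scaleC scaleR_conv_of_real)
  show "norm (x *\<^sub>C w) \<le> cmod x * norm w" for x by (simp add: norm_scaleC)
qed

lemma cinner_add_right: "cinner x (y + z) = cinner x y + cinner (x::'a::complex_inner) z"
  by (metis cinner_add_left cinner_commute complex_cnj_add)

lemma cinner_scaleC_right: "cinner x (c *\<^sub>C y) = c * cinner (x::'a::complex_inner) y"
  by (metis cinner_commute cinner_scaleC_left complex_cnj_cnj complex_cnj_mult)

lemma cinner_zero_left [simp]: "cinner 0 (x::'a::complex_inner) = 0"
  using cinner_add_left[of 0 0 x] by simp

lemma cinner_zero_right [simp]: "cinner (x::'a::complex_inner) 0 = 0"
  using cinner_add_right[of x 0 0] by simp

lemma cinner_minus_left: "cinner (- x) (y::'a::complex_inner) = - cinner x y"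
  using cinner_add_left[of x "-x" y] by (simp add: add_eq_0_iff)

lemma cinner_minus_right: "cinner x (- y::'a::complex_inner) = - cinner x y"
  using cinner_add_right[of x y "-y"] by (simp add: add_eq_0_iff)

lemma cinner_diff_left: "cinner (x - y) (z::'a::complex_inner) = cinner x z - cinner y z"
  using cinner_add_left[of x "-y" z] by (simp add: cinner_minus_left)

lemma cinner_diff_right: "cinner x (y - z::'a::complex_inner) = cinner x y - cinner x z"
  using cinner_add_right[of x y "-z"] by (simp add: cinner_minus_right)

lemma cinner_scaleR_left: "cinner (r *\<^sub>R x) (y::'a::complex_inner) = of_real r * cinner x y"
  by (metis cinner_scaleC_left complex_cnj_complex_of_real scaleC_of_real)

lemma cinner_scaleR_right: "cinner x (r *\<^sub>R y::'a::complex_inner) = of_real r * cinner x y"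
  by (metis cinner_scaleC_right scaleC_of_real)

lemma power2_norm_eq_Re_cinner: "(norm (x::'a::complex_inner))\<^sup>2 = Re (cinner x x)"
  by (simp add: norm_eq_sqrt_cinner cinner_self_nonneg)

lemma cinner_self_eq: "cinner x x = complex_of_real ((norm (x::'a::complex_inner))\<^sup>2)"
  by (simp add: power2_norm_eq_Re_cinner complex_eq_iff cinner_self_real)

lemma cinner_self_eq_0 [simp]: "cinner x x = 0 \<longleftrightarrow> (x::'a::complex_inner) = 0"
  by (simp add: cinner_self_eq)

lemma Re_cinner_commute: "Re (cinner x (y::'a::complex_inner)) = Re (cinner y x)"
  by (subst cinner_commute) simp

lemma power2_norm_add: "(norm (x + y::'a::complex_inner))\<^sup>2 = (norm x)\<^sup>2 + (norm y)\<^sup>2 + 2 * Re (cinner x y)"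
  by (simp add: power2_norm_eq_Re_cinner cinner_add_left cinner_add_right Re_cinner_commute[of y x])

lemma power2_norm_diff: "(norm (x - y::'a::complex_inner))\<^sup>2 = (norm x)\<^sup>2 + (norm y)\<^sup>2 - 2 * Re (cinner x y)"
  by (simp add: power2_norm_eq_Re_cinner cinner_diff_left cinner_diff_right Re_cinner_commute[of y x])

lemma abs_Re_cinner_le: "\<bar>Re (cinner x (y::'a::complex_inner))\<bar> \<le> norm x * norm y"
proof (cases "y = 0")
  case True then show ?thesis by simp
next
  case False
  then have ny: "norm y > 0" by simp
  define t where "t = Re (cinner x y) / (norm y)\<^sup>2"
  have "0 \<le> (norm (x - t *\<^sub>R y))\<^sup>2" by simp
  also have "\<dots> = (norm x)\<^sup>2 + t\<^sup>2 * (norm y)\<^sup>2 - 2 * t * Re (cinner x y)"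
    by (simp add: power2_norm_diff cinner_scaleR_right power_mult_distrib)
  also have "\<dots> = (norm x)\<^sup>2 - (Re (cinner x y))\<^sup>2 / (norm y)\<^sup>2"
    using ny by (simp add: t_def field_simps power2_eq_square)
  finally have "(Re (cinner x y))\<^sup>2 / (norm y)\<^sup>2 \<le> (norm x)\<^sup>2" by simp
  then have "(Re (cinner x y))\<^sup>2 \<le> (norm x)\<^sup>2 * (norm y)\<^sup>2"
    using ny by (simp add: divide_le_eq)
  then have "(Re (cinner x y))\<^sup>2 \<le> (norm x * norm y)\<^sup>2"
    by (simp add: power_mult_distrib)
  then have "\<bar>Re (cinner x y)\<bar> \<le> \<bar>norm x * norm y\<bar>"
    using abs_le_square_iff by blast
  then show ?thesis by simp
qed

lemma Cauchy_Schwarz_cinner: "cmod (cinner x (y::'a::complex_inner)) \<le> norm x * norm y"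
proof (cases "cinner x y = 0")
  case True then show ?thesis by simp
next
  case False
  define c where "c = cnj (cinner x y) / complex_of_real (cmod (cinner x y))"
  have cm: "cmod c = 1" using False by (simp add: c_def norm_divide)
  have "c * cinner x y = cnj (cinner x y) * cinner x y / complex_of_real (cmod (cinner x y))"
    by (simp add: c_def)
  also have "\<dots> = complex_of_real ((cmod (cinner x y))\<^sup>2) / complex_of_real (cmod (cinner x y))"
    by (metis complex_norm_square mult.commute of_real_power)
  also have "\<dots> = complex_of_real (cmod (cinner x y))"
    using False by (simp add: power2_eq_square)
  finally have "c * cinner x y = complex_of_real (cmod (cinner x y))" .
  then have "cmod (cinner x y) = Re (cinner x (c *\<^sub>C y))"
    by (simp add: cinner_scaleC_right)
  also have "\<dots> \<le> norm x * norm (c *\<^sub>C y)" using abs_Re_cinner_le[of x "c *\<^sub>C y"] by linarith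
  finally show ?thesis by (simp add: norm_scaleC cm)
qed

section \<open>Compact operators\<close>

lemma clinear_add: "clinear T \<Longrightarrow> T (x + y) = T x + T y"
  by (simp add: clinear_def)

lemma clinear_scaleC: "clinear T \<Longrightarrow> T (c *\<^sub>C x) = c *\<^sub>C T x"
  by (simp add: clinear_def)

lemma clinear_scaleR: "clinear T \<Longrightarrow> T (r *\<^sub>R x) = r *\<^sub>R T x"
  by (metis clinear_scaleC scaleC_of_real)

lemma clinear_linear: "clinear T \<Longrightarrow> linear T"
  by (rule linearI) (simp_all add: clinear_add clinear_scaleR)

lemma clinear_0: "clinear T \<Longrightarrow> T 0 = 0"
  using clinear_linear linear_0 by blast

lemma clinear_diff: "clinear T \<Longrightarrow> T (x - y) = T x - T y"
  using clinear_linear linear_diff by blast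

lemma clinear_opadd: "clinear x \<Longrightarrow> clinear y \<Longrightarrow> clinear (opadd x y)"
  unfolding clinear_def opadd_def by (simp add: scaleC_add_right add_ac)

lemma clinear_opscale: "clinear x \<Longrightarrow> clinear (opscale c x)"
  unfolding clinear_def opscale_def by (simp add: scaleC_add_right scaleC_scaleC mult.commute)

lemma clinear_comp: "clinear x \<Longrightarrow> clinear y \<Longrightarrow> clinear (x \<circ> y)"
  unfolding clinear_def by simp

lemma compact_op_bounded_linear:
  fixes T :: "'a::complex_normed_vector \<Rightarrow> 'a"
  assumes "compact_op T" shows "bounded_linear T"
proof -
  have cl: "clinear T" and K: "compact (closure (T ` ball 0 1))"
    using assms by (auto simp: compact_op_def)
  from K have "bounded (closure (T ` ball 0 1))" by (rule compact_imp_bounded)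
  then obtain B where B: "\<And>y. y \<in> closure (T ` ball 0 1) \<Longrightarrow> norm y \<le> B"
    by (meson bounded_iff)
  have nb: "norm (T x) \<le> norm x * (2 * B)" for x
  proof (cases "x = 0")
    case True then show ?thesis using cl by (simp add: clinear_0)
  next
    case False
    define v where "v = (1 / (2 * norm x)) *\<^sub>R x"
    have "norm v < 1" using False by (simp add: v_def)
    then have "T v \<in> closure (T ` ball 0 1)" by (intro closure_subset[THEN subsetD]) auto
    then have "norm (T v) \<le> B" by (rule B)
    moreover have "T v = (1 / (2 * norm x)) *\<^sub>R T x" using cl by (simp add: v_def clinear_scaleR)
    ultimately have "norm (T x) / (2 * norm x) \<le> B" by simp
    then show ?thesis using False by (simp add: divide_le_eq algebra_simps)
  qed
  show ?thesis
    by (rule bounded_linear_intro[where K="2*B"]) (use cl nb in \<open>auto simp: clinear_add clinear_scaleR\<close>)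
qed

lemma compact_opI:
  assumes "clinear T" "compact K" "T ` ball 0 1 \<subseteq> K"
  shows "compact_op T"
proof -
  have "closure (T ` ball 0 1) \<subseteq> K"
    using assms by (simp add: closure_minimal compact_imp_closed)
  then have "closure (T ` ball 0 1) = K \<inter> closure (T ` ball 0 1)" by blast
  moreover have "compact (K \<inter> closure (T ` ball 0 1))"
    using assms(2) by (simp add: compact_Int_closed)
  ultimately show ?thesis using assms(1) by (simp add: compact_op_def)
qed

lemma KH_bounded_linear: "T \<in> KH \<Longrightarrow> bounded_linear T"
  by (simp add: KH_def compact_op_bounded_linear)

lemma KH_clinear: "T \<in> KH \<Longrightarrow> clinear T"
  by (simp add: KH_def compact_op_def)

lemma KH_norm_le_onorm: "T \<in> KH \<Longrightarrow> norm (T x) \<le> onorm T * norm x"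
  by (simp add: KH_bounded_linear onorm)

lemma KH_compact: "T \<in> KH \<Longrightarrow> compact (closure (T ` ball 0 1))"
  by (simp add: KH_def compact_op_def)

lemma KH_opadd: assumes "x \<in> KH" "y \<in> KH" shows "opadd x y \<in> KH"
proof -
  let ?K1 = "closure (x ` ball 0 1)" and ?K2 = "closure (y ` ball 0 1)"
  have "compact_op (opadd x y)"
  proof (rule compact_opI[where K="{a + b |a b. a \<in> ?K1 \<and> b \<in> ?K2}"])
    show "clinear (opadd x y)" using assms by (simp add: clinear_opadd KH_clinear)
    show "compact {a + b |a b. a \<in> ?K1 \<and> b \<in> ?K2}"
      using assms by (intro compact_sums KH_compact)
    show "opadd x y ` ball 0 1 \<subseteq> {a + b |a b. a \<in> ?K1 \<and> b \<in> ?K2}"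
      by (auto simp: opadd_def intro!: closure_subset[THEN subsetD])
  qed
  then show ?thesis by (simp add: KH_def)
qed

lemma KH_opscale: assumes "x \<in> KH" shows "opscale c x \<in> KH"
proof -
  let ?K1 = "closure (x ` ball 0 1)"
  have "compact_op (opscale c x)"
  proof (rule compact_opI[where K="(\<lambda>v. c *\<^sub>C v) ` ?K1"])
    show "clinear (opscale c x)" using assms by (simp add: clinear_opscale KH_clinear)
    show "compact ((\<lambda>v. c *\<^sub>C v) ` ?K1)"
      using assms by (intro compact_continuous_image KH_compact
          bounded_linear.continuous_on[OF bounded_linear_scaleC_right] continuous_on_id)
    show "opscale c x ` ball 0 1 \<subseteq> (\<lambda>v. c *\<^sub>C v) ` ?K1"
      by (auto simp: opscale_def intro!: imageI closure_subset[THEN subsetD])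
  qed
  then show ?thesis by (simp add: KH_def)
qed

lemma opsub_eq_opadd: "opsub x y = opadd x (opscale (-1) y)"
  by (simp add: opsub_def opadd_def opscale_def scaleC_minus1 fun_eq_iff)

lemma KH_opsub: "x \<in> KH \<Longrightarrow> y \<in> KH \<Longrightarrow> opsub x y \<in> KH"
  by (simp add: opsub_eq_opadd KH_opadd KH_opscale)

lemma KH_comp_bounded_linear:
  assumes "x \<in> KH" "clinear y" "bounded_linear y"
  shows "x \<circ> y \<in> KH"
proof -
  define R where "R = onorm y + 1"
  have R: "R > 0" using onorm_pos_le[OF assms(3)] by (simp add: R_def)
  let ?K1 = "closure (x ` ball 0 1)"
  have "compact_op (x \<circ> y)"
  proof (rule compact_opI[where K="(\<lambda>v. R *\<^sub>R v) ` ?K1"])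
    show "clinear (x \<circ> y)" using assms by (simp add: clinear_comp KH_clinear)
    show "compact ((\<lambda>v. R *\<^sub>R v) ` ?K1)"
      using assms by (intro compact_scaling KH_compact)
    show "(x \<circ> y) ` ball 0 1 \<subseteq> (\<lambda>v. R *\<^sub>R v) ` ?K1"
    proof
      fix z assume "z \<in> (x \<circ> y) ` ball 0 1"
      then obtain v where v: "norm v < 1" "z = x (y v)" by auto
      have "norm (y v) \<le> onorm y * norm v" using assms(3) by (rule onorm)
      also have "\<dots> \<le> onorm y" using v onorm_pos_le[OF assms(3)]
        by (simp add: mult_left_le)
      finally have "norm ((1/R) *\<^sub>R y v) < 1" using R by (simp add: R_def)
      moreover have "z = R *\<^sub>R x ((1/R) *\<^sub>R y v)"
        using v R KH_clinear[OF assms(1)] by (simp add: clinear_scaleR)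
      ultimately show "z \<in> (\<lambda>v. R *\<^sub>R v) ` ?K1"
        by (auto intro!: imageI closure_subset[THEN subsetD])
    qed
  qed
  then show ?thesis by (simp add: KH_def)
qed

lemma KH_comp: "x \<in> KH \<Longrightarrow> y \<in> KH \<Longrightarrow> x \<circ> y \<in> KH"
  by (simp add: KH_comp_bounded_linear KH_bounded_linear KH_clinear)

lemma clinear_rank_one: "clinear (\<lambda>z. cinner u z *\<^sub>C w)"
  by (simp add: clinear_def cinner_add_right cinner_scaleC_right scaleC_add_left scaleC_scaleC)

lemma KH_rank_one: "(\<lambda>z. cinner u z *\<^sub>C w) \<in> (KH :: ('a::chilbert_space \<Rightarrow> 'a) set)"
proof -
  have "compact_op (\<lambda>z::'a. cinner u z *\<^sub>C w)"
  proof (rule compact_opI[where K="(\<lambda>c. c *\<^sub>C w) ` cball 0 (norm u)"])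
    show "clinear (\<lambda>z. cinner u z *\<^sub>C w)" by (rule clinear_rank_one)
    show "compact ((\<lambda>c. c *\<^sub>C w) ` cball 0 (norm u))"
      by (intro compact_continuous_image compact_cball
          bounded_linear.continuous_on[OF bounded_linear_scaleC_left] continuous_on_id)
    show "(\<lambda>z. cinner u z *\<^sub>C w) ` ball 0 1 \<subseteq> (\<lambda>c. c *\<^sub>C w) ` cball 0 (norm u)"
    proof
      fix y assume "y \<in> (\<lambda>z. cinner u z *\<^sub>C w) ` ball 0 1"
      then obtain z where z: "norm z < 1" "y = cinner u z *\<^sub>C w" by auto
      have "cmod (cinner u z) \<le> norm u * norm z" by (rule Cauchy_Schwarz_cinner)
      also have "\<dots> \<le> norm u" using z by (simp add: mult_left_le)
      finally show "y \<in> (\<lambda>c. c *\<^sub>C w) ` cball 0 (norm u)" using z by auto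
    qed
  qed
  then show ?thesis by (simp add: KH_def)
qed

section \<open>Orthogonal projection onto closed subspaces\<close>

definition csubspace :: "'a::complex_vector set \<Rightarrow> bool" where
  "csubspace N \<longleftrightarrow> 0 \<in> N \<and> (\<forall>x\<in>N. \<forall>y\<in>N. x + y \<in> N) \<and> (\<forall>c. \<forall>x\<in>N. c *\<^sub>C x \<in> N)"

definition total_set :: "'a::complex_inner set \<Rightarrow> bool" where
  "total_set E \<longleftrightarrow> (\<forall>z. (\<forall>e\<in>E. cinner e z = 0) \<longrightarrow> z = 0)"

lemma total_setD: "total_set E \<Longrightarrow> (\<And>e. e \<in> E \<Longrightarrow> cinner e z = 0) \<Longrightarrow> z = 0"
  unfolding total_set_def by blast

lemma csubspace_scaleR: "csubspace N \<Longrightarrow> x \<in> N \<Longrightarrow> r *\<^sub>R x \<in> N"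
  unfolding csubspace_def by (metis scaleC_of_real)

lemma parallelogram_law:
  "(norm (a - b::'a::complex_inner))\<^sup>2 + (norm (a + b))\<^sup>2 = 2 * (norm a)\<^sup>2 + 2 * (norm b)\<^sup>2"
  by (simp add: power2_norm_add power2_norm_diff)

lemma norm_scaleC_sq: "(norm (c *\<^sub>C x::'a::complex_normed_vector))\<^sup>2 = (cmod c)\<^sup>2 * (norm x)\<^sup>2"
  by (simp add: norm_scaleC power_mult_distrib)

text \<open>Apply the parallelogram law to \<open>z - x\<close> and \<open>z - y\<close>: their sum is twice the distance from
  \<open>z\<close> to the midpoint of \<open>x\<close> and \<open>y\<close>, which lies in \<open>N\<close>.\<close>
lemma csubspace_near_points_close:
  fixes x y z :: "'a::complex_inner"
  assumes N: "csubspace N" and xy: "x \<in> N" "y \<in> N"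
    and d: "\<And>m. m \<in> N \<Longrightarrow> d \<le> norm (z - m)" "0 \<le> d"
  shows "(norm (x - y))\<^sup>2 \<le> 2 * ((norm (z - x))\<^sup>2 - d\<^sup>2) + 2 * ((norm (z - y))\<^sup>2 - d\<^sup>2)"
proof -
  let ?mid = "(1/2) *\<^sub>R (x + y)"
  have "?mid \<in> N" using N xy by (intro csubspace_scaleR) (auto simp: csubspace_def)
  then have "d\<^sup>2 \<le> (norm (z - ?mid))\<^sup>2" using d by (simp add: power_mono)
  moreover have "(z - x) + (z - y) = 2 *\<^sub>R (z - ?mid)"
    by (simp add: algebra_simps scaleR_add_right) (metis scaleR_2)
  then have "(norm ((z - x) + (z - y)))\<^sup>2 = 4 * (norm (z - ?mid))\<^sup>2"
    by (simp add: power_mult_distrib)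
  moreover have "(z - x) - (z - y) = y - x" by simp
  ultimately show ?thesis using parallelogram_law[of "z - x" "z - y"] by (simp add: norm_minus_commute)
qed

lemma csubspace_minimizing_sequence_Cauchy:
  fixes z :: "'a::complex_inner"
  assumes N: "csubspace N" and ms: "\<And>k. ms k \<in> N"
    and d: "\<And>m. m \<in> N \<Longrightarrow> d \<le> norm (z - m)" "0 \<le> d"
    and close: "\<And>k. (norm (z - ms k))\<^sup>2 < d\<^sup>2 + 1 / real (Suc k)"
  shows "Cauchy ms"
proof (rule CauchyI)
  fix e :: real assume e: "0 < e"
  obtain M :: nat where M: "4 / e\<^sup>2 < real M" using reals_Archimedean2 by blast
  have small: "4 * ((norm (z - ms i))\<^sup>2 - d\<^sup>2) < e\<^sup>2" if "M \<le> i" for i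
  proof -
    define \<delta> where "\<delta> = 1 / real (Suc i)"
    have "4 / e\<^sup>2 < real (Suc i)" using M that by linarith
    then have "4 * \<delta> < e\<^sup>2" using e by (simp add: \<delta>_def field_simps)
    then show ?thesis using close[of i] unfolding \<delta>_def[symmetric] by (simp add: algebra_simps)
  qed
  show "\<exists>M. \<forall>m\<ge>M. \<forall>n\<ge>M. norm (ms m - ms n) < e"
  proof (intro exI allI impI)
    fix i j assume "M \<le> i" "M \<le> j"
    then have "(norm (ms i - ms j))\<^sup>2 < e\<^sup>2"
      using csubspace_near_points_close[OF N ms[of i] ms[of j] d(1) d(2)] small[of i] small[of j]
      by linarith
    then show "norm (ms i - ms j) < e" using e by (simp add: power_less_imp_less_base)
  qed
qed

lemma closed_csubspace_nearest_point:
  fixes z :: "'a::chilbert_space"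
  assumes N: "csubspace N" "closed N"
  obtains n where "n \<in> N" "\<And>m. m \<in> N \<Longrightarrow> norm (z - n) \<le> norm (z - m)"
proof -
  define d where "d = Inf ((\<lambda>m. norm (z - m)) ` N)"
  have N0: "0 \<in> N" using N by (simp add: csubspace_def)
  have bdd: "bdd_below ((\<lambda>m. norm (z - m)) ` N)" by (rule bdd_belowI[where m=0]) auto
  have dle: "d \<le> norm (z - m)" if "m \<in> N" for m
    unfolding d_def using bdd that by (simp add: cInf_lower)
  have d0: "0 \<le> d" unfolding d_def using N0 by (intro cInf_greatest) auto
  have "\<exists>m\<in>N. (norm (z - m))\<^sup>2 < d\<^sup>2 + 1 / real (Suc k)" for k
  proof -
    have "sqrt (d\<^sup>2) < sqrt (d\<^sup>2 + 1 / real (Suc k))" by (intro real_sqrt_less_mono) simp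
    then have "d < sqrt (d\<^sup>2 + 1 / real (Suc k))" using d0 by simp
    then have "\<exists>x\<in>(\<lambda>m. norm (z - m)) ` N. x < sqrt (d\<^sup>2 + 1 / real (Suc k))"
      using cInf_less_iff[OF _ bdd] N0 unfolding d_def by blast
    then obtain m where m: "m \<in> N" "norm (z - m) < sqrt (d\<^sup>2 + 1 / real (Suc k))"
      by blast
    have "(norm (z - m))\<^sup>2 < (sqrt (d\<^sup>2 + 1 / real (Suc k)))\<^sup>2"
      by (rule power_strict_mono) (use m in auto)
    moreover have "(sqrt (d\<^sup>2 + 1 / real (Suc k)))\<^sup>2 = d\<^sup>2 + 1 / real (Suc k)"
      by (intro real_sqrt_pow2 add_nonneg_nonneg) auto
    ultimately show ?thesis using m by auto
  qed
  then obtain ms where ms: "\<And>k. ms k \<in> N" "\<And>k. (norm (z - ms k))\<^sup>2 < d\<^sup>2 + 1 / real (Suc k)"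
    by metis
  obtain n where lim: "ms \<longlonglongrightarrow> n"
    using csubspace_minimizing_sequence_Cauchy[OF N(1) ms(1) dle d0 ms(2)]
    by (auto simp: Cauchy_convergent_iff convergent_def)
  have "(norm (z - n))\<^sup>2 \<le> d\<^sup>2"
  proof (rule LIMSEQ_le)
    show "(\<lambda>k. (norm (z - ms k))\<^sup>2) \<longlonglongrightarrow> (norm (z - n))\<^sup>2"
      by (intro tendsto_intros lim)
    show "(\<lambda>k. d\<^sup>2 + 1 / real (Suc k)) \<longlonglongrightarrow> d\<^sup>2"
      using tendsto_add[OF tendsto_const LIMSEQ_inverse_real_of_nat, of "d\<^sup>2"]
      by (simp add: inverse_eq_divide)
    show "\<exists>N. \<forall>k\<ge>N. (norm (z - ms k))\<^sup>2 \<le> d\<^sup>2 + 1 / real (Suc k)"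
      using ms(2) less_imp_le by blast
  qed
  then have nd: "norm (z - n) \<le> d" by (rule power2_le_imp_le[OF _ d0])
  show thesis
  proof (rule that)
    show "n \<in> N" using closed_sequentially[OF N(2) ms(1) lim] .
    show "norm (z - n) \<le> norm (z - m)" if "m \<in> N" for m
      using nd dle[OF that] by (rule order_trans)
  qed
qed

text \<open>If \<open>\<langle>m, z - n\<rangle> = c \<noteq> 0\<close>, moving from \<open>n\<close> by a small multiple of \<open>c m\<close> decreases the
  distance to \<open>z\<close>.\<close>
lemma nearest_point_orthogonal:
  fixes z :: "'a::complex_inner"
  assumes N: "csubspace N" and n: "n \<in> N"
    and opt: "\<And>m. m \<in> N \<Longrightarrow> norm (z - n) \<le> norm (z - m)"
    and m: "m \<in> N"
  shows "cinner m (z - n) = 0"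
proof (rule ccontr)
  assume "cinner m (z - n) \<noteq> 0"
  define c where "c = cinner m (z - n)"
  define w where "w = z - n"
  define t :: real where "t = 1 / ((norm m)\<^sup>2 + 1)"
  define s where "s = complex_of_real t * c"
  have c0: "cmod c > 0" using \<open>cinner m (z - n) \<noteq> 0\<close> by (simp add: c_def)
  have t0: "t > 0" unfolding t_def by (simp add: add_nonneg_pos)
  have "norm w \<le> norm (z - (n + s *\<^sub>C m))"
    unfolding w_def using N n m by (intro opt) (auto simp: csubspace_def)
  also have "z - (n + s *\<^sub>C m) = w - s *\<^sub>C m" by (simp add: w_def)
  finally have "(norm w)\<^sup>2 \<le> (norm (w - s *\<^sub>C m))\<^sup>2" by (simp add: power_mono)
  also have "(norm (w - s *\<^sub>C m))\<^sup>2 = (norm w)\<^sup>2 + (cmod s)\<^sup>2 * (norm m)\<^sup>2 - 2 * Re (cinner w (s *\<^sub>C m))"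
    by (simp add: power2_norm_diff norm_scaleC_sq)
  also have "cinner w (s *\<^sub>C m) = complex_of_real (t * (cmod c)\<^sup>2)"
  proof -
    have "cinner w m = cnj c" by (simp add: c_def w_def cinner_commute[of m])
    then have "cinner w (s *\<^sub>C m) = complex_of_real t * (c * cnj c)"
      by (simp add: cinner_scaleC_right s_def mult.assoc)
    then show ?thesis by (simp add: complex_norm_square[symmetric])
  qed
  also have "(cmod s)\<^sup>2 = t\<^sup>2 * (cmod c)\<^sup>2" using t0 by (simp add: s_def norm_mult power_mult_distrib)
  finally have "2 * (t * (cmod c)\<^sup>2) \<le> t\<^sup>2 * (cmod c)\<^sup>2 * (norm m)\<^sup>2" by simp
  then have le: "2 * (t * (cmod c)\<^sup>2) \<le> (t * (norm m)\<^sup>2) * (t * (cmod c)\<^sup>2)"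
    by (simp add: algebra_simps power2_eq_square)
  have "t * (norm m)\<^sup>2 < 1" unfolding t_def by (simp add: add_nonneg_pos divide_less_eq)
  moreover have pos: "t * (cmod c)\<^sup>2 > 0" using t0 c0 by simp
  ultimately have "(t * (norm m)\<^sup>2) * (t * (cmod c)\<^sup>2) < 1 * (t * (cmod c)\<^sup>2)"
    by (rule mult_strict_right_mono)
  then show False using le pos by linarith
qed

lemma closed_csubspace_total_set:
  fixes E :: "'a::chilbert_space set"
  assumes E: "total_set E" and N: "csubspace N" "closed N" "E \<subseteq> N"
  shows "N = UNIV"
proof -
  have "z \<in> N" for z
  proof -
    obtain n where n: "n \<in> N" "\<And>m. m \<in> N \<Longrightarrow> norm (z - n) \<le> norm (z - m)"
      using closed_csubspace_nearest_point[OF N(1,2)] by blast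
    have "z - n = 0" using N(3) by (intro total_setD[OF E] nearest_point_orthogonal[OF N(1) n]) auto
    then show ?thesis using n by simp
  qed
  then show ?thesis by auto
qed

lemma csubspace_kernel: "clinear T \<Longrightarrow> csubspace {v. T v = 0}"
  by (simp add: csubspace_def clinear_0 clinear_add clinear_scaleC)

lemma closed_kernel: "bounded_linear T \<Longrightarrow> closed {v. T v = 0}"
  by (intro closed_Collect_eq linear_continuous_on continuous_on_const)

lemma bounded_clinear_eq_zero_on_total_set:
  fixes E :: "'a::chilbert_space set"
  assumes E: "total_set E"
    and T: "clinear T" "bounded_linear T" and van: "\<And>e. e \<in> E \<Longrightarrow> T e = 0"
  shows "T = (\<lambda>_. 0)"
proof -
  have "{v. T v = 0} = UNIV"
    using van by (intro closed_csubspace_total_set[OF E] csubspace_kernel closed_kernel T) auto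
  then show ?thesis by auto
qed

section \<open>Operator-norm limits of compact operators\<close>

lemma bounded_linear_cinner_right: "bounded_linear (\<lambda>v. cinner e (v::'a::complex_inner))"
proof (rule bounded_linear_intro[where K="norm e"])
  show "cinner e (x + y) = cinner e x + cinner e y" for x y by (rule cinner_add_right)
  show "cinner e (r *\<^sub>R x) = r *\<^sub>R cinner e x" for r x by (simp add: cinner_scaleR_right scaleR_conv_of_real)
  show "cmod (cinner e x) \<le> norm x * norm e" for x using Cauchy_Schwarz_cinner[of e x] by (simp add: mult.commute)
qed

lemma bounded_linear_cinner_left: "bounded_linear (\<lambda>v. cinner (v::'a::complex_inner) e)"
proof (rule bounded_linear_intro[where K="norm e"])
  show "cinner (x + y) e = cinner x e + cinner y e" for x y by (rule cinner_add_left)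
  show "cinner (r *\<^sub>R x) e = r *\<^sub>R cinner x e" for r x by (simp add: cinner_scaleR_left scaleR_conv_of_real)
  show "cmod (cinner x e) \<le> norm x * norm e" for x using Cauchy_Schwarz_cinner[of x e] by simp
qed

lemma tendsto_cinner_right: "f \<longlonglongrightarrow> L \<Longrightarrow> (\<lambda>n. cinner e (f n)) \<longlonglongrightarrow> cinner e (L::'a::complex_inner)"
  by (rule bounded_linear.tendsto[OF bounded_linear_cinner_right])

lemma tendsto_cinner_left: "f \<longlonglongrightarrow> L \<Longrightarrow> (\<lambda>n. cinner (f n) e) \<longlonglongrightarrow> cinner (L::'a::complex_inner) e"
  by (rule bounded_linear.tendsto[OF bounded_linear_cinner_left])

lemma tendsto_scaleC: "f \<longlonglongrightarrow> L \<Longrightarrow> (\<lambda>n. c *\<^sub>C f n) \<longlonglongrightarrow> c *\<^sub>C (L::'a::complex_normed_vector)"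
  by (rule bounded_linear.tendsto[OF bounded_linear_scaleC_right])

lemma tendsto_scaleC_left: "f \<longlonglongrightarrow> L \<Longrightarrow> (\<lambda>n. f n *\<^sub>C e) \<longlonglongrightarrow> L *\<^sub>C (e::'a::complex_normed_vector)"
  by (rule bounded_linear.tendsto[OF bounded_linear_scaleC_left])

lemma limit_of_multiples:
  fixes e :: "'a::complex_inner"
  assumes lim: "f \<longlonglongrightarrow> L" and eig: "\<And>n. \<exists>c. f n = c *\<^sub>C e"
  shows "\<exists>c. L = c *\<^sub>C e"
proof (cases "e = 0")
  case True
  then have "f = (\<lambda>n. 0)" using eig by (auto simp: fun_eq_iff)
  then have "L = 0" using lim LIMSEQ_unique tendsto_const by metis
  then show ?thesis by (simp add: True)
next
  case False
  have fe: "f n = (cinner e (f n) / cinner e e) *\<^sub>C e" for n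
  proof -
    obtain c where c: "f n = c *\<^sub>C e" using eig by blast
    then show ?thesis using False by (simp add: cinner_scaleC_right)
  qed
  have "(\<lambda>n. (cinner e (f n) / cinner e e) *\<^sub>C e) \<longlonglongrightarrow> (cinner e L / cinner e e) *\<^sub>C e"
    by (intro tendsto_scaleC_left tendsto_divide tendsto_const tendsto_cinner_right lim) (use False in simp)
  then have "f \<longlonglongrightarrow> (cinner e L / cinner e e) *\<^sub>C e" using fe by simp
  then show ?thesis using LIMSEQ_unique lim by blast
qed

lemma onorm_opsub_commute: "onorm (opsub x y) = onorm (opsub y x)"
proof -
  have "opsub y x = (\<lambda>v. - opsub x y v)" by (simp add: opsub_def fun_eq_iff)
  then show ?thesis by (simp add: onorm_neg)
qed

lemma KH_onorm_nonneg: "x \<in> KH \<Longrightarrow> 0 \<le> onorm x"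
  by (simp add: KH_bounded_linear onorm_pos_le)

lemma opsub_apply: "opsub x y v = x v - y v"
  by (simp add: opsub_def)

lemma onorm_tendsto_imp_pointwise:
  assumes "\<And>n. xs n \<in> KH" "x \<in> KH" "(\<lambda>n. onorm (opsub (xs n) x)) \<longlonglongrightarrow> 0"
  shows "(\<lambda>n. xs n v) \<longlonglongrightarrow> x v"
proof -
  have "(\<lambda>n. xs n v - x v) \<longlonglongrightarrow> 0"
  proof (rule Lim_null_comparison)
    show "\<forall>\<^sub>F n in sequentially. norm (xs n v - x v) \<le> onorm (opsub (xs n) x) * norm v"
      using KH_norm_le_onorm[OF KH_opsub[OF assms(1) assms(2)], of _ v] by (simp add: opsub_apply)
    show "(\<lambda>n. onorm (opsub (xs n) x) * norm v) \<longlonglongrightarrow> 0"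
      using tendsto_mult[OF assms(3) tendsto_const, of "norm v"] by simp
  qed
  then show ?thesis by (rule LIM_zero_cancel)
qed

lemma onorm_opsub_triangle:
  assumes "x \<in> KH" "y \<in> KH" "z \<in> KH"
  shows "onorm (opsub x z) \<le> onorm (opsub x y) + onorm (opsub y z)"
proof -
  have "opsub x z = (\<lambda>v. opsub x y v + opsub y z v)" by (simp add: opsub_def fun_eq_iff)
  then show ?thesis using assms by (simp add: onorm_triangle KH_bounded_linear KH_opsub)
qed

lemma clinear_pointwise_limit:
  fixes x :: "'a::complex_normed_vector \<Rightarrow> 'a"
  assumes cl: "\<And>n. clinear (xs n)" and lim: "\<And>v. (\<lambda>n. xs n v) \<longlonglongrightarrow> x v"
  shows "clinear x"
  unfolding clinear_def
proof (intro conjI allI)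
  fix a b
  have "(\<lambda>n. xs n (a + b)) \<longlonglongrightarrow> x a + x b"
    using tendsto_add[OF lim[of a] lim[of b]] cl by (simp add: clinear_add)
  then show "x (a + b) = x a + x b" using lim[of "a + b"] LIMSEQ_unique by blast
next
  fix c a
  have "(\<lambda>n. xs n (c *\<^sub>C a)) \<longlonglongrightarrow> c *\<^sub>C x a"
    using tendsto_scaleC[OF lim[of a]] cl by (simp add: clinear_scaleC)
  then show "x (c *\<^sub>C a) = c *\<^sub>C x a" using lim[of "c *\<^sub>C a"] LIMSEQ_unique by blast
qed

definition uniform_op_limit :: "(nat \<Rightarrow> 'a::real_normed_vector \<Rightarrow> 'a) \<Rightarrow> ('a \<Rightarrow> 'a) \<Rightarrow> bool" where
  "uniform_op_limit xs x \<longleftrightarrow> (\<forall>e>0. \<exists>N. \<forall>n\<ge>N. \<forall>v. norm (xs n v - x v) \<le> e * norm v)"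

lemma onorm_Cauchy_uniform_op_limit:
  fixes xs :: "nat \<Rightarrow> 'a::chilbert_space \<Rightarrow> 'a"
  assumes xs: "\<And>n. xs n \<in> KH"
    and cauchy: "\<And>e. e > 0 \<Longrightarrow> \<exists>N. \<forall>m\<ge>N. \<forall>n\<ge>N. onorm (opsub (xs m) (xs n)) < e"
  obtains x where "clinear x" "uniform_op_limit xs x"
proof -
  have bnd: "norm (xs m v - xs n v) \<le> onorm (opsub (xs m) (xs n)) * norm v" for m n v
    using KH_norm_le_onorm[OF KH_opsub[OF xs xs], of m n v] by (simp add: opsub_apply)
  have "Cauchy (\<lambda>n. xs n v)" for v
  proof (rule CauchyI)
    fix e :: real assume e: "e > 0"
    obtain N where N: "\<And>m n. m \<ge> N \<Longrightarrow> n \<ge> N \<Longrightarrow> onorm (opsub (xs m) (xs n)) < e / (norm v + 1)"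
      using cauchy[of "e / (norm v + 1)"] e by (auto simp: add_nonneg_pos)
    have "e / (norm v + 1) * norm v < e"
      using e by (simp add: pos_divide_less_eq add_nonneg_pos)
    then have "norm (xs m v - xs n v) < e" if "N \<le> m" "N \<le> n" for m n
      using bnd[of m v n] mult_right_mono[OF less_imp_le[OF N[OF that]] norm_ge_zero[of v]] by linarith
    then show "\<exists>M. \<forall>m\<ge>M. \<forall>n\<ge>M. norm (xs m v - xs n v) < e" by blast
  qed
  then have lim: "(\<lambda>n. xs n v) \<longlonglongrightarrow> lim (\<lambda>n. xs n v)" for v
    by (simp add: Cauchy_convergent_iff convergent_LIMSEQ_iff)
  define x where "x v = lim (\<lambda>n. xs n v)" for v
  note lim = lim[folded x_def]
  have "clinear x" using xs lim by (rule clinear_pointwise_limit[of xs x, OF KH_clinear])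
  moreover have "uniform_op_limit xs x"
    unfolding uniform_op_limit_def
  proof (intro allI impI)
    fix e :: real assume "e > 0"
    then obtain N where N: "\<And>m n. m \<ge> N \<Longrightarrow> n \<ge> N \<Longrightarrow> onorm (opsub (xs m) (xs n)) < e"
      using cauchy by blast
    have "norm (xs n v - x v) \<le> e * norm v" if n: "N \<le> n" for n v
    proof (rule LIMSEQ_le_const2)
      show "(\<lambda>m. norm (xs n v - xs m v)) \<longlonglongrightarrow> norm (xs n v - x v)"
        by (intro tendsto_intros lim)
      have "norm (xs n v - xs m v) \<le> e * norm v" if "N \<le> m" for m
        using bnd[of n v m] mult_right_mono[OF less_imp_le[OF N[OF n that]] norm_ge_zero[of v]]
        by linarith
      then show "\<exists>M. \<forall>m\<ge>M. norm (xs n v - xs m v) \<le> e * norm v" by blast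
    qed
    then show "\<exists>N. \<forall>n\<ge>N. \<forall>v. norm (xs n v - x v) \<le> e * norm v" by blast
  qed
  ultimately show thesis using that by blast
qed

lemma uniform_op_limit_bounded_linear:
  assumes xs: "\<And>n. bounded_linear (xs n)" and x: "linear x" and lim: "uniform_op_limit xs x"
  shows "bounded_linear x"
proof -
  have "(1::real) > 0" by simp
  then obtain N where "\<forall>n\<ge>N. \<forall>v. norm (xs n v - x v) \<le> 1 * norm v"
    using lim unfolding uniform_op_limit_def by blast
  then have N: "\<And>v. norm (xs N v - x v) \<le> 1 * norm v" by blast
  have "norm (x v) \<le> norm v * (onorm (xs N) + 1)" for v
  proof -
    have "norm (x v) \<le> norm (xs N v) + norm (xs N v - x v)"
      by (metis add.commute norm_triangle_sub norm_minus_commute)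
    also have "\<dots> \<le> onorm (xs N) * norm v + norm v"
      using N[of v] onorm[OF xs] by (intro add_mono) auto
    finally show ?thesis by (simp add: algebra_simps)
  qed
  then show ?thesis using x unfolding bounded_linear_def bounded_linear_axioms_def by blast
qed

lemma uniform_op_limit_onorm_tendsto:
  assumes xs: "\<And>n. bounded_linear (xs n)" and x: "bounded_linear x" and lim: "uniform_op_limit xs x"
  shows "(\<lambda>n. onorm (opsub (xs n) x)) \<longlonglongrightarrow> 0"
proof (rule LIMSEQ_I)
  fix r :: real assume r: "r > 0"
  then have "r/2 > 0" by simp
  then obtain N where N: "\<And>n v. n \<ge> N \<Longrightarrow> norm (xs n v - x v) \<le> (r/2) * norm v"
    using lim unfolding uniform_op_limit_def by blast
  have "norm (onorm (opsub (xs n) x) - 0) < r" if "N \<le> n" for n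
  proof -
    have "onorm (opsub (xs n) x) \<le> r/2"
      using r N[OF that] by (intro onorm_bound) (auto simp: opsub_apply)
    moreover have "0 \<le> onorm (opsub (xs n) x)"
      unfolding opsub_def by (intro onorm_pos_le bounded_linear_sub xs x)
    ultimately show ?thesis using r by simp
  qed
  then show "\<exists>no. \<forall>n\<ge>no. norm (onorm (opsub (xs n) x) - 0) < r" by blast
qed

text \<open>The image of the unit ball under \<open>x\<close> is totally bounded: it lies within \<open>\<epsilon>/3\<close> of the
  image under some \<open>xs n\<close>, which is covered by finitely many \<open>\<epsilon>/3\<close>-balls.\<close>
lemma uniform_op_limit_compact:
  fixes xs :: "nat \<Rightarrow> 'a::chilbert_space \<Rightarrow> 'a"
  assumes xs: "\<And>n. xs n \<in> KH" and lim: "uniform_op_limit xs x"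
  shows "compact (closure (x ` ball 0 1))"
proof -
  have "Met_TC.mtotally_bounded (x ` ball 0 1)"
    unfolding Met_TC.mtotally_bounded_def mball_eq_ball
  proof (intro allI impI)
    fix \<epsilon> :: real assume \<epsilon>: "\<epsilon> > 0"
    then have "\<epsilon>/3 > 0" by simp
    then obtain n where "\<forall>m\<ge>n. \<forall>v. norm (xs m v - x v) \<le> (\<epsilon>/3) * norm v"
      using lim unfolding uniform_op_limit_def by blast
    then have n: "\<And>v. norm (xs n v - x v) \<le> (\<epsilon>/3) * norm v" by blast
    have close: "norm (xs n v - x v) < \<epsilon>/3" if "v \<in> ball 0 1" for v
    proof -
      have "(\<epsilon>/3) * norm v < \<epsilon>/3" using that \<epsilon> by simp
      then show ?thesis using n[of v] by linarith
    qed
    have "Met_TC.mtotally_bounded (xs n ` ball 0 1)"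
      using KH_compact[OF xs[of n]] by (simp add: Met_TC.mtotally_bounded_eq_compact_closure_of complete_UNIV)
    then obtain K where K: "finite K" "K \<subseteq> xs n ` ball 0 1" "xs n ` ball 0 1 \<subseteq> (\<Union>k\<in>K. ball k (\<epsilon>/3))"
      unfolding Met_TC.mtotally_bounded_def mball_eq_ball using \<epsilon> by (meson divide_pos_pos zero_less_numeral)
    define pre where "pre k = (SOME v. v \<in> ball 0 1 \<and> xs n v = k)" for k
    have pre: "pre k \<in> ball 0 1 \<and> xs n (pre k) = k" if "k \<in> K" for k
      unfolding pre_def by (rule someI_ex) (use that K(2) in blast)
    show "\<exists>K'. finite K' \<and> K' \<subseteq> x ` ball 0 1 \<and> x ` ball 0 1 \<subseteq> (\<Union>k\<in>K'. ball k \<epsilon>)"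
    proof (intro exI conjI)
      show "finite ((\<lambda>k. x (pre k)) ` K)" using K(1) by simp
      show "(\<lambda>k. x (pre k)) ` K \<subseteq> x ` ball 0 1" using pre by auto
      show "x ` ball 0 1 \<subseteq> (\<Union>k\<in>(\<lambda>k. x (pre k)) ` K. ball k \<epsilon>)"
      proof
        fix y assume "y \<in> x ` ball 0 1"
        then obtain v where v: "v \<in> ball 0 1" "y = x v" by auto
        then obtain k where k: "k \<in> K" "xs n v \<in> ball k (\<epsilon>/3)" using K(3) by blast
        have "dist (x (pre k)) y
            = norm ((x (pre k) - xs n (pre k)) + (xs n (pre k) - xs n v) + (xs n v - x v))"
          unfolding v(2) dist_norm by simp
        also have "\<dots> \<le> norm (x (pre k) - xs n (pre k)) + norm (xs n (pre k) - xs n v) + norm (xs n v - x v)"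
          by (intro order_trans[OF norm_triangle_ineq] add_right_mono norm_triangle_ineq)
        also have "\<dots> < \<epsilon>/3 + \<epsilon>/3 + \<epsilon>/3"
        proof -
          have "norm (x (pre k) - xs n (pre k)) < \<epsilon>/3"
            using close[of "pre k"] pre[OF k(1)] by (simp add: norm_minus_commute)
          moreover have "norm (xs n (pre k) - xs n v) < \<epsilon>/3"
            using k pre[OF k(1)] by (simp add: dist_norm)
          moreover have "norm (xs n v - x v) < \<epsilon>/3" using close v by simp
          ultimately show ?thesis by linarith
        qed
        finally show "y \<in> (\<Union>k\<in>(\<lambda>k. x (pre k)) ` K. ball k \<epsilon>)" using k(1) by auto
      qed
    qed
  qed
  then show ?thesis
    by (simp add: Met_TC.mtotally_bounded_eq_compact_closure_of complete_UNIV)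
qed

lemma KH_onorm_complete:
  fixes xs :: "nat \<Rightarrow> 'a::chilbert_space \<Rightarrow> 'a"
  assumes xs: "\<And>n. xs n \<in> KH"
    and cauchy: "\<And>e. e > 0 \<Longrightarrow> \<exists>N. \<forall>m\<ge>N. \<forall>n\<ge>N. onorm (opsub (xs m) (xs n)) < e"
  shows "\<exists>x\<in>KH. (\<lambda>n. onorm (opsub (xs n) x)) \<longlonglongrightarrow> 0"
proof -
  obtain x where cl: "clinear x" and lim: "uniform_op_limit xs x"
    using onorm_Cauchy_uniform_op_limit[OF xs cauchy] by blast
  have "bounded_linear x"
    using KH_bounded_linear[OF xs] clinear_linear[OF cl] lim by (rule uniform_op_limit_bounded_linear)
  moreover have "x \<in> KH" using cl uniform_op_limit_compact[OF xs lim] by (simp add: KH_def compact_op_def)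
  ultimately show ?thesis
    using uniform_op_limit_onorm_tendsto[OF KH_bounded_linear[OF xs] _ lim] by blast
qed

section \<open>Adjoints and the diagonal algebra of a total set\<close>

lemma is_adjoint_sym: "is_adjoint y x \<Longrightarrow> is_adjoint x y"
  unfolding is_adjoint_def by (metis cinner_commute)

lemma is_adjoint_opadd: "is_adjoint y x \<Longrightarrow> is_adjoint y' x' \<Longrightarrow> is_adjoint (opadd y y') (opadd x x')"
  unfolding is_adjoint_def opadd_def by (simp add: cinner_add_left cinner_add_right)

lemma is_adjoint_opscale: "is_adjoint y x \<Longrightarrow> is_adjoint (opscale (cnj c) y) (opscale c x)"
  unfolding is_adjoint_def opscale_def by (simp add: cinner_scaleC_left cinner_scaleC_right)

lemma is_adjoint_comp: "is_adjoint y x \<Longrightarrow> is_adjoint y' x' \<Longrightarrow> is_adjoint (y' \<circ> y) (x \<circ> x')"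
  unfolding is_adjoint_def by simp

lemma is_adjoint_opsub: "is_adjoint y x \<Longrightarrow> is_adjoint y' x' \<Longrightarrow> is_adjoint (opsub y y') (opsub x x')"
  unfolding is_adjoint_def opsub_def by (simp add: cinner_diff_left cinner_diff_right)

lemma is_adjoint_onorm_le:
  assumes adj: "is_adjoint y x" and x: "x \<in> KH" and y: "y \<in> KH"
  shows "onorm y \<le> onorm x"
proof (rule onorm_bound)
  show "0 \<le> onorm x" using x by (rule KH_onorm_nonneg)
  fix v
  have "(norm (y v))\<^sup>2 = Re (cinner (y v) (y v))" by (rule power2_norm_eq_Re_cinner)
  also have "cinner (y v) (y v) = cinner (x (y v)) v" using adj by (simp add: is_adjoint_def)
  also have "Re (cinner (x (y v)) v) \<le> norm (x (y v)) * norm v"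
    using Cauchy_Schwarz_cinner[of "x (y v)" v] complex_Re_le_cmod order_trans by blast
  also have "\<dots> \<le> onorm x * norm (y v) * norm v"
    using KH_norm_le_onorm[OF x, of "y v"] by (simp add: mult_right_mono)
  finally have "norm (y v) * norm (y v) \<le> (onorm x * norm v) * norm (y v)"
    by (simp add: power2_eq_square algebra_simps)
  then show "norm (y v) \<le> onorm x * norm v"
    by (cases "y v = 0") (auto simp: KH_onorm_nonneg x)
qed

text \<open>The zero vector counts as an eigenvector.\<close>
definition eigvec :: "('a::complex_vector \<Rightarrow> 'a) \<Rightarrow> 'a \<Rightarrow> bool" where
  "eigvec x e \<longleftrightarrow> (\<exists>c. x e = c *\<^sub>C e)"

lemma eigvec_add: "eigvec x e \<Longrightarrow> eigvec y e \<Longrightarrow> eigvec (opadd x y) e"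
  unfolding eigvec_def opadd_def by (metis scaleC_add_left)

lemma eigvec_scale: "eigvec x e \<Longrightarrow> eigvec (opscale c x) e"
  unfolding eigvec_def opscale_def by (metis scaleC_scaleC)

lemma eigvec_comp: "clinear x \<Longrightarrow> eigvec x e \<Longrightarrow> eigvec y e \<Longrightarrow> eigvec (x \<circ> y) e"
  unfolding eigvec_def by (metis clinear_scaleC comp_apply scaleC_scaleC)

definition diag_alg :: "'a::chilbert_space set \<Rightarrow> ('a \<Rightarrow> 'a) set" where
  "diag_alg E = {x. x \<in> KH \<and> (\<forall>e\<in>E. eigvec x e) \<and> (\<exists>y\<in>KH. is_adjoint y x \<and> (\<forall>e\<in>E. eigvec y e))}"

lemma diag_alg_KH: "x \<in> diag_alg E \<Longrightarrow> x \<in> KH"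
  by (simp add: diag_alg_def)

lemma diag_alg_add: "x \<in> diag_alg E \<Longrightarrow> y \<in> diag_alg E \<Longrightarrow> opadd x y \<in> diag_alg E"
  unfolding diag_alg_def by (auto intro!: KH_opadd eigvec_add is_adjoint_opadd bexI[where x="opadd _ _"])

lemma diag_alg_scale: "x \<in> diag_alg E \<Longrightarrow> opscale c x \<in> diag_alg E"
  unfolding diag_alg_def by (auto intro!: KH_opscale eigvec_scale is_adjoint_opscale bexI[where x="opscale (cnj c) _"])

lemma diag_alg_comp: "x \<in> diag_alg E \<Longrightarrow> y \<in> diag_alg E \<Longrightarrow> x \<circ> y \<in> diag_alg E"
  unfolding diag_alg_def by (auto intro!: KH_comp eigvec_comp is_adjoint_comp KH_clinear bexI[where x="_ \<circ> _"])

lemma diag_alg_sub: "x \<in> diag_alg E \<Longrightarrow> y \<in> diag_alg E \<Longrightarrow> opsub x y \<in> diag_alg E"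
  by (simp add: opsub_eq_opadd diag_alg_add diag_alg_scale)

lemma diag_alg_eigvec: "x \<in> diag_alg E \<Longrightarrow> e \<in> E \<Longrightarrow> eigvec x e"
  by (simp add: diag_alg_def)

lemma diag_alg_adj: "x \<in> diag_alg E \<Longrightarrow> \<exists>y\<in>diag_alg E. is_adjoint y x"
  unfolding diag_alg_def by (auto intro: is_adjoint_sym)

text \<open>Adjoints of an operator-norm convergent sequence are Cauchy, since taking adjoints does not
  increase the norm; their limit is an adjoint of the limit.\<close>
lemma adjoint_onorm_limit:
  fixes xs :: "nat \<Rightarrow> 'a::chilbert_space \<Rightarrow> 'a"
  assumes xs: "\<And>n. xs n \<in> KH" and x: "x \<in> KH" and lim: "(\<lambda>n. onorm (opsub (xs n) x)) \<longlonglongrightarrow> 0"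
    and ys: "\<And>n. ys n \<in> KH" "\<And>n. is_adjoint (ys n) (xs n)"
  obtains y where "y \<in> KH" "is_adjoint y x" "\<And>v. (\<lambda>n. ys n v) \<longlonglongrightarrow> y v"
proof -
  have "\<exists>y\<in>KH. (\<lambda>n. onorm (opsub (ys n) y)) \<longlonglongrightarrow> 0"
  proof (rule KH_onorm_complete[OF ys(1)])
    fix e :: real assume e: "e > 0"
    obtain N where N: "\<And>n. n \<ge> N \<Longrightarrow> norm (onorm (opsub (xs n) x) - 0) < e/2"
      using LIMSEQ_D[OF lim, of "e/2"] e by auto
    have "onorm (opsub (ys m) (ys n)) < e" if "N \<le> m" "N \<le> n" for m n
    proof -
      have "onorm (opsub (ys m) (ys n)) \<le> onorm (opsub (xs m) (xs n))"
        by (intro is_adjoint_onorm_le is_adjoint_opsub ys KH_opsub xs)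
      also have "\<dots> \<le> onorm (opsub (xs m) x) + onorm (opsub x (xs n))"
        by (intro onorm_opsub_triangle xs x)
      also have "\<dots> < e/2 + e/2"
        using N[OF that(1)] N[OF that(2)] by (simp add: onorm_opsub_commute[of x])
      finally show ?thesis by simp
    qed
    then show "\<exists>N. \<forall>m\<ge>N. \<forall>n\<ge>N. onorm (opsub (ys m) (ys n)) < e" by blast
  qed
  then obtain y where y: "y \<in> KH" "(\<lambda>n. onorm (opsub (ys n) y)) \<longlonglongrightarrow> 0" by blast
  have pw: "(\<lambda>n. xs n v) \<longlonglongrightarrow> x v" "(\<lambda>n. ys n v) \<longlonglongrightarrow> y v" for v
    by (rule onorm_tendsto_imp_pointwise[OF xs x lim], rule onorm_tendsto_imp_pointwise[OF ys(1) y])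
  have "is_adjoint y x"
    unfolding is_adjoint_def
  proof (intro allI)
    fix u v
    have "(\<lambda>n. cinner (xs n u) v) \<longlonglongrightarrow> cinner (x u) v" by (intro tendsto_cinner_left pw)
    moreover have "(\<lambda>n. cinner (xs n u) v) \<longlonglongrightarrow> cinner u (y v)"
      using tendsto_cinner_right[OF pw(2)[of v], of u] ys(2) by (simp add: is_adjoint_def)
    ultimately show "cinner (x u) v = cinner u (y v)" using LIMSEQ_unique by blast
  qed
  then show thesis using that y(1) pw(2) by blast
qed

lemma diag_alg_closed:
  assumes xs: "\<And>n. xs n \<in> diag_alg E" and x: "x \<in> KH"
    and lim: "(\<lambda>n. onorm (opsub (xs n) x)) \<longlonglongrightarrow> 0"
  shows "x \<in> diag_alg E"
proof -
  have xsK: "xs n \<in> KH" for n using xs by (simp add: diag_alg_def)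
  have eigx: "eigvec x e" if "e \<in> E" for e
    using limit_of_multiples[OF onorm_tendsto_imp_pointwise[OF xsK x lim]] xs that
    by (auto simp: diag_alg_def eigvec_def)
  have "\<forall>n. \<exists>y. y \<in> KH \<and> is_adjoint y (xs n) \<and> (\<forall>e\<in>E. eigvec y e)"
    using xs unfolding diag_alg_def by blast
  then obtain ys where ys: "\<And>n. ys n \<in> KH" "\<And>n. is_adjoint (ys n) (xs n)"
    "\<And>n e. e \<in> E \<Longrightarrow> eigvec (ys n) e"
    by metis
  obtain y where y: "y \<in> KH" "is_adjoint y x" "\<And>v. (\<lambda>n. ys n v) \<longlonglongrightarrow> y v"
    using adjoint_onorm_limit[of xs x ys, OF xsK x lim ys(1) ys(2)] by blast
  have "eigvec y e" if "e \<in> E" for e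
    using limit_of_multiples[OF y(3)[of e]] ys(3)[OF that] by (auto simp: eigvec_def)
  then show ?thesis unfolding diag_alg_def using x eigx y(1,2) by blast
qed

lemma cstar_subalg_diag_alg: "cstar_subalg (diag_alg E)"
  unfolding cstar_subalg_def
proof (intro conjI)
  show "diag_alg E \<subseteq> KH" using diag_alg_KH by blast
  show "\<forall>x\<in>diag_alg E. \<forall>y\<in>diag_alg E. opadd x y \<in> diag_alg E \<and> x \<circ> y \<in> diag_alg E" by (simp add: diag_alg_add diag_alg_comp)
  show "\<forall>c. \<forall>x\<in>diag_alg E. opscale c x \<in> diag_alg E" by (simp add: diag_alg_scale)
  show "\<forall>x\<in>diag_alg E. \<exists>y\<in>diag_alg E. is_adjoint y x" by (simp add: diag_alg_adj)
  show "\<forall>xs x. (\<forall>n. xs n \<in> diag_alg E) \<and> x \<in> KH \<and> (\<lambda>n. onorm (opsub (xs n) x)) \<longlonglongrightarrow> 0 \<longrightarrow> x \<in> diag_alg E"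
    using diag_alg_closed by blast
qed

lemma cstar_gen_subset_diag_alg: "G \<subseteq> diag_alg E \<Longrightarrow> cstar_gen G \<subseteq> diag_alg E"
  unfolding cstar_gen_def using cstar_subalg_diag_alg by blast

text \<open>The absolute value only matters outside \<open>KH\<close>, where \<open>onorm\<close> carries no information.\<close>
definition op_dist :: "('a::chilbert_space \<Rightarrow> 'a) \<Rightarrow> ('a \<Rightarrow> 'a) \<Rightarrow> real" where
  "op_dist x y = \<bar>onorm (opsub x y)\<bar>"

lemma op_dist_KH: "x \<in> KH \<Longrightarrow> y \<in> KH \<Longrightarrow> op_dist x y = onorm (opsub x y)"
  by (simp add: op_dist_def KH_onorm_nonneg KH_opsub)

lemma Metric_space_diag_alg: "Metric_space (diag_alg E) op_dist"
proof
  show "0 \<le> op_dist x y" for x y by (simp add: op_dist_def)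
  show "op_dist x y = op_dist y x" for x y by (simp add: op_dist_def onorm_opsub_commute)
  show "op_dist x y = 0 \<longleftrightarrow> x = y" if "x \<in> diag_alg E" "y \<in> diag_alg E" for x y
  proof -
    have "bounded_linear (opsub x y)" using that by (simp add: KH_bounded_linear KH_opsub diag_alg_KH)
    then have "onorm (opsub x y) = 0 \<longleftrightarrow> (\<forall>v. x v - y v = 0)" by (simp add: onorm_eq_0 opsub_apply)
    then show ?thesis by (auto simp: op_dist_def fun_eq_iff)
  qed
  show "op_dist x z \<le> op_dist x y + op_dist y z"
    if "x \<in> diag_alg E" "y \<in> diag_alg E" "z \<in> diag_alg E" for x y z
    using that by (simp add: op_dist_KH diag_alg_KH onorm_opsub_triangle)
qed

section \<open>Matrix coefficients of a weak-2-local derivation\<close>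

lemma vector_functional_dual_KH:
  fixes u w :: "'a::chilbert_space"
  shows "(\<lambda>z. cinner w (z u)) \<in> dual_KH"
  unfolding dual_KH_def
proof (intro CollectI conjI ballI allI)
  show "cinner w (opadd x y u) = cinner w (x u) + cinner w (y u)" for x y
    by (simp add: opadd_def cinner_add_right)
  show "cinner w (opscale c x u) = c * cinner w (x u)" for c x
    by (simp add: opscale_def cinner_scaleC_right)
  show "\<exists>M. \<forall>x\<in>(KH::('a \<Rightarrow> 'a) set). cmod (cinner w (x u)) \<le> M * onorm x"
  proof (intro exI ballI)
    fix x :: "'a \<Rightarrow> 'a" assume x: "x \<in> KH"
    have "cmod (cinner w (x u)) \<le> norm w * norm (x u)" by (rule Cauchy_Schwarz_cinner)
    also have "\<dots> \<le> norm w * (onorm x * norm u)" using KH_norm_le_onorm[OF x] by (simp add: mult_left_mono)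
    finally show "cmod (cinner w (x u)) \<le> norm w * norm u * onorm x" by (simp add: algebra_simps)
  qed
qed

text \<open>For an eigenvector \<open>u\<close> of \<open>x\<close> this is its eigenvalue; note \<open>rayleigh x 0 = 0\<close>.\<close>
definition rayleigh :: "('a::complex_inner \<Rightarrow> 'a) \<Rightarrow> 'a \<Rightarrow> complex" where
  "rayleigh x u = cinner u (x u) / cinner u u"

lemma rayleigh_opadd: "rayleigh (opadd x y) u = rayleigh x u + rayleigh y u"
  by (simp add: rayleigh_def opadd_def cinner_add_right add_divide_distrib)

lemma rayleigh_opscale: "rayleigh (opscale c x) u = c * rayleigh x u"
  by (simp add: rayleigh_def opscale_def cinner_scaleC_right)

lemma rayleigh_scaleR:
  assumes "clinear x" "r \<noteq> 0"
  shows "rayleigh x (r *\<^sub>R u) = rayleigh x u"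
  using assms by (simp add: rayleigh_def clinear_scaleR cinner_scaleR_left cinner_scaleR_right)

lemma cmod_rayleigh_le:
  assumes "z \<in> KH"
  shows "cmod (rayleigh z v) \<le> onorm z"
proof (cases "v = 0")
  case True then show ?thesis using KH_onorm_nonneg[OF assms] by (simp add: rayleigh_def)
next
  case False
  have "cmod (cinner v (z v)) \<le> norm v * norm (z v)" by (rule Cauchy_Schwarz_cinner)
  also have "\<dots> \<le> norm v * (onorm z * norm v)" using KH_norm_le_onorm[OF assms] by (simp add: mult_left_mono)
  finally have "cmod (cinner v (z v)) \<le> onorm z * (norm v)\<^sup>2" by (simp add: power2_eq_square algebra_simps)
  then show ?thesis using False
    by (simp add: rayleigh_def cinner_self_eq norm_divide norm_power divide_le_eq)
qed

lemma eigvec_rayleigh: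
  assumes "clinear x" "eigvec x u"
  shows "x u = rayleigh x u *\<^sub>C u"
proof (cases "u = 0")
  case True then show ?thesis using assms by (simp add: clinear_0)
next
  case False
  obtain a where a: "x u = a *\<^sub>C u" using assms(2) by (auto simp: eigvec_def)
  then have "rayleigh x u = a" using False by (simp add: rayleigh_def cinner_scaleC_right)
  then show ?thesis using a by simp
qed

lemma rayleigh_eqI: "u \<noteq> 0 \<Longrightarrow> x u = c *\<^sub>C u \<Longrightarrow> rayleigh x u = c"
  by (simp add: rayleigh_def cinner_scaleC_right)

lemma rayleigh_comp:
  assumes "clinear x" "eigvec x u" "eigvec y u"
  shows "rayleigh (x \<circ> y) u = rayleigh x u * rayleigh y u"
proof (cases "u = 0")
  case True then show ?thesis by (simp add: rayleigh_def)
next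
  case False
  obtain a b where a: "x u = a *\<^sub>C u" and b: "y u = b *\<^sub>C u" using assms(2,3) by (auto simp: eigvec_def)
  have "(x \<circ> y) u = (a * b) *\<^sub>C u" using a b by (simp add: clinear_scaleC[OF assms(1)] scaleC_scaleC mult.commute)
  then show ?thesis using rayleigh_eqI[where x=x, OF False a] rayleigh_eqI[where x=y, OF False b]
      rayleigh_eqI[where x="x \<circ> y", OF False] by simp
qed

lemma eigvec_scaleR: "clinear x \<Longrightarrow> eigvec x e \<Longrightarrow> eigvec x (r *\<^sub>R e)"
  unfolding eigvec_def by (metis clinear_scaleR scaleC_of_real scaleC_scaleC mult.commute)

text \<open>The eigenvalue of \<open>xs\<close> at \<open>w\<close> is the conjugate of \<open>rayleigh x w\<close>.\<close>
lemma cinner_adjoint_eigvec: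
  assumes "is_adjoint xs x" "eigvec xs w"
  shows "cinner w (x v) = rayleigh x w * cinner w v"
proof (cases "w = 0")
  case True then show ?thesis by simp
next
  case False
  obtain b where b: "xs w = b *\<^sub>C w" using assms(2) by (auto simp: eigvec_def)
  have gen: "cinner w (x v) = cnj b * cinner w v" for v
  proof -
    have "cinner w (x v) = cnj (cinner (x v) w)" by (rule cinner_commute)
    also have "\<dots> = cnj (cinner v (xs w))" using assms(1) by (simp add: is_adjoint_def)
    also have "\<dots> = cnj b * cinner w v" by (simp add: b cinner_scaleC_right cinner_commute[of v w])
    finally show ?thesis .
  qed
  have "rayleigh x w = cnj b" using gen[of w] False by (simp add: rayleigh_def)
  then show ?thesis using gen by simp
qed

lemma diag_alg_cinner_eigvec: "x \<in> diag_alg E \<Longrightarrow> w \<in> E \<Longrightarrow> cinner w (x v) = rayleigh x w * cinner w v"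
  unfolding diag_alg_def using cinner_adjoint_eigvec by blast

definition rank_one_proj :: "'a::complex_inner \<Rightarrow> 'a \<Rightarrow> 'a" where
  "rank_one_proj u = (\<lambda>z. cinner u z *\<^sub>C u)"

lemma KH_rank_one_proj: "rank_one_proj u \<in> KH"
  unfolding rank_one_proj_def by (rule KH_rank_one)

lemma weak_2_local_derivation_KH: "weak_2_local_derivation \<Delta> \<Longrightarrow> x \<in> KH \<Longrightarrow> \<Delta> x \<in> KH"
  by (simp add: weak_2_local_derivation_def)

text \<open>Choose a derivation \<open>D\<close> agreeing with \<open>\<Delta>\<close> at \<open>x\<close> and at \<open>p = rank_one_proj u\<close> under the
  functional \<open>z \<mapsto> \<langle>w, z u\<rangle>\<close>, and evaluate \<open>D (x p) = D x p + x D p\<close> at \<open>u\<close>, using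
  \<open>x p = \<lambda>\<^sub>u p\<close> and \<open>p u = u\<close>.\<close>
lemma weak_2_local_derivation_coeff:
  fixes \<Delta> :: "('a::chilbert_space \<Rightarrow> 'a) \<Rightarrow> ('a \<Rightarrow> 'a)"
  assumes W: "weak_2_local_derivation \<Delta>" and x: "x \<in> KH" and eu: "eigvec x u" and nu: "norm u = 1"
    and adj: "is_adjoint xs x" and ew: "eigvec xs w"
  shows "cinner w (\<Delta> x u) = (rayleigh x u - rayleigh x w) * cinner w (\<Delta> (rank_one_proj u) u)"
proof -
  let ?p = "rank_one_proj u"
  let ?\<phi> = "\<lambda>z. cinner w (z u)"
  have all: "\<forall>a\<in>KH. \<forall>b\<in>KH. \<forall>\<phi>\<in>dual_KH. \<exists>D. derivation_KH D \<and> \<phi> (\<Delta> a) = \<phi> (D a) \<and> \<phi> (\<Delta> b) = \<phi> (D b)"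
    using W by (simp add: weak_2_local_derivation_def)
  have "\<exists>D. derivation_KH D \<and> ?\<phi> (\<Delta> x) = ?\<phi> (D x) \<and> ?\<phi> (\<Delta> ?p) = ?\<phi> (D ?p)"
    using bspec[OF bspec[OF bspec[OF all x] KH_rank_one_proj[of u]] vector_functional_dual_KH[of w u]]
    by simp
  then obtain D where D: "derivation_KH D" "?\<phi> (\<Delta> x) = ?\<phi> (D x)" "?\<phi> (\<Delta> ?p) = ?\<phi> (D ?p)"
    by blast
  have Dl: "D (x \<circ> ?p) = opadd (D x \<circ> ?p) (x \<circ> D ?p)"
    and Ds: "D (opscale (rayleigh x u) ?p) = opscale (rayleigh x u) (D ?p)"
    using D(1) x KH_rank_one_proj unfolding derivation_KH_def derivation_into_KH_def lin_on_def by blast+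
  have xu: "x u = rayleigh x u *\<^sub>C u" by (rule eigvec_rayleigh[OF KH_clinear[OF x] eu])
  have "x \<circ> ?p = opscale (rayleigh x u) ?p"
    by (auto simp: fun_eq_iff rank_one_proj_def opscale_def clinear_scaleC[OF KH_clinear[OF x]] xu
        scaleC_scaleC mult.commute)
  then have eq: "opadd (D x \<circ> ?p) (x \<circ> D ?p) = opscale (rayleigh x u) (D ?p)" using Dl Ds by simp
  have pu: "?p u = u"
    using nu by (simp add: rank_one_proj_def cinner_self_eq scaleC_one)
  from fun_cong[OF eq, of u] have "D x u + x (D ?p u) = rayleigh x u *\<^sub>C D ?p u"
    by (simp add: opadd_def opscale_def pu)
  then have "cinner w (D x u) + cinner w (x (D ?p u)) = rayleigh x u * cinner w (D ?p u)"
    by (metis cinner_add_right cinner_scaleC_right)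
  then have "cinner w (D x u) = (rayleigh x u - rayleigh x w) * cinner w (D ?p u)"
    using cinner_adjoint_eigvec[OF adj ew, of "D ?p u"] by (simp add: algebra_simps)
  then show ?thesis using D(2,3) by simp
qed

lemma KH_eq_zero_on_total_set:
  fixes E :: "'a::chilbert_space set"
  assumes total: "total_set E" and T: "T \<in> KH"
    and van: "\<And>e w. e \<in> E \<Longrightarrow> w \<in> E \<Longrightarrow> cinner w (T e) = 0"
  shows "T = (\<lambda>_. 0)"
  using van by (intro bounded_clinear_eq_zero_on_total_set[OF total KH_clinear[OF T] KH_bounded_linear[OF T]]
      total_setD[OF total]) blast

lemma opsub_eq_zero_imp_eq: "opsub A B = (\<lambda>_. 0) \<Longrightarrow> A = B"
  by (simp add: opsub_def fun_eq_iff)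

lemma opadd_apply: "opadd x y v = x v + y v"
  by (simp add: opadd_def)

lemma opscale_apply: "opscale c x v = c *\<^sub>C x v"
  by (simp add: opscale_def)
section \<open>Weak limits of operators\<close>

lemma closed_set_of_convergence:
  fixes f :: "nat \<Rightarrow> 'a::real_normed_vector \<Rightarrow> complex" and g :: "'a \<Rightarrow> complex"
  assumes fL: "\<And>n x y. cmod (f n x - f n y) \<le> K * norm (x - y)"
    and gL: "\<And>x y. cmod (g x - g y) \<le> K * norm (x - y)"
  shows "closed {x. (\<lambda>n. f n x) \<longlonglongrightarrow> g x}"
  unfolding closed_sequential_limits
proof (intro allI impI, elim conjE)
  fix s l assume s: "\<forall>n. s n \<in> {x. (\<lambda>n. f n x) \<longlonglongrightarrow> g x}" and sl: "s \<longlonglongrightarrow> l"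
  have "(\<lambda>n. f n l) \<longlonglongrightarrow> g l"
  proof (rule LIMSEQ_I)
    fix r :: real assume r: "r > 0"
    define \<delta> where "\<delta> = r / (3 * (\<bar>K\<bar> + 1))"
    have \<delta>: "\<delta> > 0" using r by (simp add: \<delta>_def add_nonneg_pos)
    have small: "a < r / 3" if "a \<le> K * t" "0 \<le> t" "t < \<delta>" for a t
    proof -
      have "K * t \<le> (\<bar>K\<bar> + 1) * t" using that(2) by (intro mult_right_mono) auto
      also have "\<dots> < (\<bar>K\<bar> + 1) * \<delta>" using that(3) by (intro mult_strict_left_mono) auto
      also have "\<dots> = r / 3"
        using abs_ge_zero[of K] unfolding \<delta>_def by (simp add: field_simps del: abs_ge_zero)
      finally show ?thesis using that(1) by linarith
    qed
    obtain j where j: "norm (s j - l) < \<delta>" using LIMSEQ_D[OF sl \<delta>] by auto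
    have "(\<lambda>n. f n (s j)) \<longlonglongrightarrow> g (s j)" using s by simp
    then obtain N where N: "\<And>n. n \<ge> N \<Longrightarrow> cmod (f n (s j) - g (s j)) < r/3"
      using LIMSEQ_D[of "\<lambda>n. f n (s j)" "g (s j)" "r/3"] r by auto
    have "cmod (f n l - g l) < r" if "N \<le> n" for n
    proof -
      have "cmod (f n l - f n (s j)) < r/3" using j by (intro small[OF fL]) (auto simp: norm_minus_commute)
      moreover have "cmod (g (s j) - g l) < r/3" using j by (intro small[OF gL]) auto
      moreover have "cmod (f n l - g l)
          \<le> cmod (f n l - f n (s j)) + cmod (f n (s j) - g (s j)) + cmod (g (s j) - g l)"
        using norm_triangle_ineq[of "f n l - f n (s j)" "f n (s j) - g (s j)"]
          norm_triangle_ineq[of "f n l - f n (s j) + (f n (s j) - g (s j))" "g (s j) - g l"] by simp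
      ultimately show ?thesis using N[OF that] by linarith
    qed
    then show "\<exists>no. \<forall>n\<ge>no. norm (f n l - g l) < r" by blast
  qed
  then show "l \<in> {x. (\<lambda>n. f n x) \<longlonglongrightarrow> g x}" by simp
qed

lemma cmod_cinner_diff_left_le:
  "norm y \<le> K \<Longrightarrow> cmod (cinner x y - cinner x' (y::'a::complex_inner)) \<le> K * norm (x - x')"
proof -
  assume y: "norm y \<le> K"
  have "cmod (cinner x y - cinner x' y) = cmod (cinner (x - x') y)" by (simp add: cinner_diff_left)
  also have "\<dots> \<le> norm (x - x') * norm y" by (rule Cauchy_Schwarz_cinner)
  also have "\<dots> \<le> norm (x - x') * K" using y by (simp add: mult_left_mono)
  finally show ?thesis by (simp add: mult.commute)
qed

lemma cinner_tendsto_total_set: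
  fixes y :: "nat \<Rightarrow> 'a::chilbert_space"
  assumes total: "total_set E" and bnd: "\<And>n. norm (y n) \<le> K" "norm y0 \<le> K"
    and lim: "\<And>w. w \<in> E \<Longrightarrow> (\<lambda>n. cinner w (y n)) \<longlonglongrightarrow> cinner w y0"
  shows "(\<lambda>n. cinner w (y n)) \<longlonglongrightarrow> cinner w y0"
proof -
  let ?N = "{w. (\<lambda>n. cinner w (y n)) \<longlonglongrightarrow> cinner w y0}"
  have "?N = UNIV"
  proof (rule closed_csubspace_total_set[OF total])
    show "csubspace ?N"
      unfolding csubspace_def
    proof (intro conjI ballI allI)
      show "0 \<in> ?N" by simp
      fix x x' assume "x \<in> ?N" "x' \<in> ?N"
      then show "x + x' \<in> ?N" using tendsto_add by (fastforce simp: cinner_add_left)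
    next
      fix c x assume "x \<in> ?N"
      then show "c *\<^sub>C x \<in> ?N" using tendsto_mult[OF tendsto_const] by (fastforce simp: cinner_scaleC_left)
    qed
    show "closed ?N"
      by (rule closed_set_of_convergence[where K=K]) (intro cmod_cinner_diff_left_le bnd)+
    show "E \<subseteq> ?N" using lim by blast
  qed
  then show ?thesis by blast
qed

lemma cmod_cinner_op_diff_le:
  assumes "clinear A" "\<And>v. norm (A v) \<le> K * norm v"
  shows "cmod (cinner w (A x) - cinner w (A x')) \<le> norm w * K * norm (x - x')"
proof -
  have "cmod (cinner w (A x) - cinner w (A x')) = cmod (cinner w (A (x - x')))"
    by (simp add: cinner_diff_right clinear_diff[OF assms(1)])
  also have "\<dots> \<le> norm w * norm (A (x - x'))" by (rule Cauchy_Schwarz_cinner)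
  also have "\<dots> \<le> norm w * (K * norm (x - x'))" using assms(2) by (simp add: mult_left_mono)
  finally show ?thesis by (simp add: mult.assoc)
qed

lemma weak_op_tendsto_total_set:
  fixes A :: "nat \<Rightarrow> 'a::chilbert_space \<Rightarrow> 'a"
  assumes total: "total_set E" and A: "\<And>n. A n \<in> KH" "A0 \<in> KH"
    and bnd: "\<And>n. onorm (A n) \<le> K" "onorm A0 \<le> K"
    and lim: "\<And>e w. e \<in> E \<Longrightarrow> w \<in> E \<Longrightarrow> (\<lambda>n. cinner w (A n e)) \<longlonglongrightarrow> cinner w (A0 e)"
  shows "(\<lambda>n. cinner w (A n v)) \<longlonglongrightarrow> cinner w (A0 v)"
proof -
  have nA: "norm (A n v) \<le> K * norm v" for n v
    using KH_norm_le_onorm[OF A(1), of n v] bnd(1)[of n] by (meson mult_right_mono norm_ge_zero order_trans)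
  have nA0: "norm (A0 v) \<le> K * norm v" for v
    using KH_norm_le_onorm[OF A(2), of v] bnd(2) by (meson mult_right_mono norm_ge_zero order_trans)
  have cl: "clinear (A n)" "clinear A0" for n using A by (simp_all add: KH_clinear)
  let ?V = "{v. \<forall>w. (\<lambda>n. cinner w (A n v)) \<longlonglongrightarrow> cinner w (A0 v)}"
  have "?V = UNIV"
  proof (rule closed_csubspace_total_set[OF total])
    show "csubspace ?V"
      unfolding csubspace_def
    proof (intro conjI ballI allI)
      show "0 \<in> ?V" by (simp add: clinear_0 cl)
      fix x y assume "x \<in> ?V" "y \<in> ?V"
      then show "x + y \<in> ?V" using tendsto_add by (fastforce simp: clinear_add cl cinner_add_right)
    next
      fix c x assume "x \<in> ?V"
      then show "c *\<^sub>C x \<in> ?V" using tendsto_mult[OF tendsto_const]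
        by (fastforce simp: clinear_scaleC cl cinner_scaleC_right)
    qed
    have "closed {v. (\<lambda>n. cinner w (A n v)) \<longlonglongrightarrow> cinner w (A0 v)}" for w
      by (rule closed_set_of_convergence[where K="norm w * K"])
        (intro cmod_cinner_op_diff_le cl nA nA0)+
    moreover have "?V = (\<Inter>w. {v. (\<lambda>n. cinner w (A n v)) \<longlonglongrightarrow> cinner w (A0 v)})" by auto
    ultimately show "closed ?V" by (simp add: closed_INT)
    show "E \<subseteq> ?V"
    proof
      fix e assume e: "e \<in> E"
      have "(\<lambda>n. cinner w (A n e)) \<longlonglongrightarrow> cinner w (A0 e)" for w
        by (rule cinner_tendsto_total_set[OF total, where K="K * norm e"]) (use nA nA0 lim[OF e] in auto)
      then show "e \<in> ?V" by blast
    qed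
  qed
  then show ?thesis by blast
qed

lemma onorm_le_of_weak_op_limit:
  assumes A: "\<And>n. A n \<in> KH" "A0 \<in> KH" and bnd: "\<And>n. onorm (A n) \<le> k"
    and lim: "\<And>v w. (\<lambda>n. cinner w (A n v)) \<longlonglongrightarrow> cinner w (A0 v)"
  shows "onorm A0 \<le> k"
proof (rule onorm_bound)
  show k0: "0 \<le> k" using bnd[of 0] KH_onorm_nonneg[OF A(1)[of 0]] by linarith
  fix v
  have An: "norm (A n v) \<le> k * norm v" for n
    using KH_norm_le_onorm[OF A(1), of n v] bnd[of n] by (meson mult_right_mono norm_ge_zero order_trans)
  have "cmod (cinner (A0 v) (A0 v)) \<le> norm (A0 v) * (k * norm v)"
  proof (rule LIMSEQ_le_const2)
    show "(\<lambda>n. cmod (cinner (A0 v) (A n v))) \<longlonglongrightarrow> cmod (cinner (A0 v) (A0 v))"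
      by (intro tendsto_intros lim)
    have "cmod (cinner (A0 v) (A n v)) \<le> norm (A0 v) * (k * norm v)" for n
      using Cauchy_Schwarz_cinner[of "A0 v" "A n v"] mult_left_mono[OF An[of n] norm_ge_zero[of "A0 v"]]
      by linarith
    then show "\<exists>N. \<forall>n\<ge>N. cmod (cinner (A0 v) (A n v)) \<le> norm (A0 v) * (k * norm v)" by blast
  qed
  then have "norm (A0 v) * norm (A0 v) \<le> norm (A0 v) * (k * norm v)"
    by (simp add: cinner_self_eq power2_eq_square norm_mult)
  then show "norm (A0 v) \<le> k * norm v"
    using k0 by (cases "A0 v = 0") auto
qed

section \<open>Weak-2-local derivations on the diagonal algebra\<close>

context
  fixes \<Delta> :: "('a::chilbert_space \<Rightarrow> 'a) \<Rightarrow> ('a \<Rightarrow> 'a)" and E :: "'a set"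
  assumes W: "weak_2_local_derivation \<Delta>" and total: "total_set E"
begin

lemma Delta_KH: "x \<in> diag_alg E \<Longrightarrow> \<Delta> x \<in> KH"
  by (intro weak_2_local_derivation_KH[OF W] diag_alg_KH)

lemma Delta_coeff:
  assumes e: "e \<in> E" and w: "w \<in> E"
  obtains c where "\<And>x. x \<in> diag_alg E \<Longrightarrow> cinner w (\<Delta> x e) = (rayleigh x e - rayleigh x w) * c"
proof (cases "e = 0")
  case True
  show thesis
  proof (rule that[of 0])
    fix x assume "x \<in> diag_alg E"
    then have "\<Delta> x e = 0" using True by (simp add: clinear_0 KH_clinear Delta_KH)
    then show "cinner w (\<Delta> x e) = (rayleigh x e - rayleigh x w) * 0" by simp
  qed
next
  case False
  define u where "u = (1 / norm e) *\<^sub>R e"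
  have n1: "norm u = 1" using False by (simp add: u_def)
  have e_u: "e = norm e *\<^sub>R u" using False by (simp add: u_def)
  show thesis
  proof (rule that)
    fix x assume x: "x \<in> diag_alg E"
    have cl: "clinear (\<Delta> x)" "clinear x" using x by (simp_all add: KH_clinear Delta_KH diag_alg_KH)
    obtain xs where xs: "is_adjoint xs x" "eigvec xs w" using x w unfolding diag_alg_def by blast
    have "cinner w (\<Delta> x e) = norm e * cinner w (\<Delta> x u)"
      by (subst e_u) (simp add: clinear_scaleR[OF cl(1)] cinner_scaleR_right)
    also have "cinner w (\<Delta> x u) = (rayleigh x u - rayleigh x w) * cinner w (\<Delta> (rank_one_proj u) u)"
      using x e unfolding u_def
      by (intro weak_2_local_derivation_coeff[OF W diag_alg_KH[OF x] _ n1[unfolded u_def] xs]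
          eigvec_scaleR diag_alg_eigvec cl(2))
    also have "rayleigh x u = rayleigh x e" using False by (simp add: u_def rayleigh_scaleR[OF cl(2)])
    finally show "cinner w (\<Delta> x e)
        = (rayleigh x e - rayleigh x w) * (norm e * cinner w (\<Delta> (rank_one_proj u) u))"
      by (simp add: algebra_simps)
  qed
qed

lemma Delta_opadd:
  assumes x: "x \<in> diag_alg E" and y: "y \<in> diag_alg E"
  shows "\<Delta> (opadd x y) = opadd (\<Delta> x) (\<Delta> y)"
proof (rule opsub_eq_zero_imp_eq, rule KH_eq_zero_on_total_set[OF total])
  show "opsub (\<Delta> (opadd x y)) (opadd (\<Delta> x) (\<Delta> y)) \<in> KH"
    by (intro KH_opsub KH_opadd Delta_KH diag_alg_add x y)
  fix e w assume "e \<in> E" "w \<in> E"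
  then obtain c where c: "\<And>z. z \<in> diag_alg E \<Longrightarrow> cinner w (\<Delta> z e) = (rayleigh z e - rayleigh z w) * c"
    using Delta_coeff by blast
  show "cinner w (opsub (\<Delta> (opadd x y)) (opadd (\<Delta> x) (\<Delta> y)) e) = 0"
    by (simp add: opsub_apply opadd_apply cinner_diff_right cinner_add_right c x y diag_alg_add
        rayleigh_opadd algebra_simps)
qed

lemma Delta_opscale:
  assumes x: "x \<in> diag_alg E"
  shows "\<Delta> (opscale a x) = opscale a (\<Delta> x)"
proof (rule opsub_eq_zero_imp_eq, rule KH_eq_zero_on_total_set[OF total])
  show "opsub (\<Delta> (opscale a x)) (opscale a (\<Delta> x)) \<in> KH"
    by (intro KH_opsub KH_opscale Delta_KH diag_alg_scale x)
  fix e w assume "e \<in> E" "w \<in> E"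
  then obtain c where c: "\<And>z. z \<in> diag_alg E \<Longrightarrow> cinner w (\<Delta> z e) = (rayleigh z e - rayleigh z w) * c"
    using Delta_coeff by blast
  show "cinner w (opsub (\<Delta> (opscale a x)) (opscale a (\<Delta> x)) e) = 0"
    by (simp add: opsub_apply opscale_apply cinner_diff_right cinner_scaleC_right c x diag_alg_scale
        rayleigh_opscale algebra_simps)
qed

lemma Delta_opsub: "x \<in> diag_alg E \<Longrightarrow> y \<in> diag_alg E \<Longrightarrow> \<Delta> (opsub x y) = opsub (\<Delta> x) (\<Delta> y)"
  by (simp add: opsub_eq_opadd Delta_opadd Delta_opscale diag_alg_scale)

text \<open>Both sides have the same coefficient \<open>(\<lambda>\<^sub>e(x) \<lambda>\<^sub>e(y) - \<lambda>\<^sub>w(x) \<lambda>\<^sub>w(y)) c\<close>.\<close>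
lemma Delta_comp:
  assumes x: "x \<in> diag_alg E" and y: "y \<in> diag_alg E"
  shows "\<Delta> (x \<circ> y) = opadd (\<Delta> x \<circ> y) (x \<circ> \<Delta> y)"
proof (rule opsub_eq_zero_imp_eq, rule KH_eq_zero_on_total_set[OF total])
  have xK: "x \<in> KH" and yK: "y \<in> KH" using x y by (simp_all add: diag_alg_KH)
  show "opsub (\<Delta> (x \<circ> y)) (opadd (\<Delta> x \<circ> y) (x \<circ> \<Delta> y)) \<in> KH"
    by (intro KH_opsub KH_opadd KH_comp Delta_KH diag_alg_comp x y xK yK)
  fix e w assume e: "e \<in> E" and w: "w \<in> E"
  obtain c where c: "\<And>z. z \<in> diag_alg E \<Longrightarrow> cinner w (\<Delta> z e) = (rayleigh z e - rayleigh z w) * c"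
    using Delta_coeff[OF e w] by blast
  have ye: "y e = rayleigh y e *\<^sub>C e"
    by (rule eigvec_rayleigh[OF KH_clinear[OF yK] diag_alg_eigvec[OF y e]])
  have "rayleigh (x \<circ> y) e = rayleigh x e * rayleigh y e"
    using x y e by (intro rayleigh_comp KH_clinear xK diag_alg_eigvec)
  moreover have "rayleigh (x \<circ> y) w = rayleigh x w * rayleigh y w"
    using diag_alg_cinner_eigvec[OF x w, of "y w"] by (simp add: rayleigh_def)
  moreover have "cinner w ((\<Delta> x \<circ> y) e) = rayleigh y e * cinner w (\<Delta> x e)"
    using ye by (simp add: clinear_scaleC[OF KH_clinear[OF Delta_KH[OF x]]] cinner_scaleC_right)
  moreover have "cinner w ((x \<circ> \<Delta> y) e) = rayleigh x w * cinner w (\<Delta> y e)"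
    using diag_alg_cinner_eigvec[OF x w] by simp
  ultimately show "cinner w (opsub (\<Delta> (x \<circ> y)) (opadd (\<Delta> x \<circ> y) (x \<circ> \<Delta> y)) e) = 0"
    by (simp add: opsub_apply opadd_apply cinner_diff_right cinner_add_right c x y diag_alg_comp
        algebra_simps)
qed

text \<open>Since \<open>\<Delta>\<close> is linear on the diagonal algebra, the coefficient formula bounds
  \<open>\<langle>w, (\<Delta> x\<^sub>n - \<Delta> x) e\<rangle>\<close> by \<open>2 \<parallel>x\<^sub>n - x\<parallel> |c|\<close>.\<close>
lemma Delta_coeff_continuous:
  assumes xs: "\<And>n. xs n \<in> diag_alg E" and x: "x \<in> diag_alg E"
    and lim: "(\<lambda>n. onorm (opsub (xs n) x)) \<longlonglongrightarrow> 0"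
    and e: "e \<in> E" and w: "w \<in> E"
  shows "(\<lambda>n. cinner w (\<Delta> (xs n) e)) \<longlonglongrightarrow> cinner w (\<Delta> x e)"
proof -
  obtain c where c: "\<And>z. z \<in> diag_alg E \<Longrightarrow> cinner w (\<Delta> z e) = (rayleigh z e - rayleigh z w) * c"
    using Delta_coeff[OF e w] by blast
  define z where "z n = opsub (xs n) x" for n
  have zS: "z n \<in> diag_alg E" for n by (simp add: z_def diag_alg_sub xs x)
  have bound: "cmod (cinner w (\<Delta> (xs n) e) - cinner w (\<Delta> x e)) \<le> 2 * onorm (z n) * cmod c" for n
  proof -
    have "cinner w (\<Delta> (xs n) e) - cinner w (\<Delta> x e) = (rayleigh (z n) e - rayleigh (z n) w) * c"
      using Delta_opsub[OF xs x] c[OF zS] by (simp add: z_def opsub_apply cinner_diff_right)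
    moreover have "cmod (rayleigh (z n) e - rayleigh (z n) w) \<le> 2 * onorm (z n)"
      using norm_triangle_ineq4[of "rayleigh (z n) e" "rayleigh (z n) w"]
        cmod_rayleigh_le[OF diag_alg_KH[OF zS], of n e] cmod_rayleigh_le[OF diag_alg_KH[OF zS], of n w]
      by linarith
    ultimately show ?thesis by (simp add: norm_mult mult_right_mono)
  qed
  have "(\<lambda>n. cinner w (\<Delta> (xs n) e) - cinner w (\<Delta> x e)) \<longlonglongrightarrow> 0"
  proof (rule Lim_null_comparison)
    show "\<forall>\<^sub>F n in sequentially. norm (cinner w (\<Delta> (xs n) e) - cinner w (\<Delta> x e)) \<le> 2 * onorm (z n) * cmod c"
      by (intro always_eventually allI bound)
    show "(\<lambda>n. 2 * onorm (z n) * cmod c) \<longlonglongrightarrow> 0"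
      using tendsto_mult[OF tendsto_mult[OF tendsto_const lim] tendsto_const, of 2 "cmod c"]
      by (simp add: z_def)
  qed
  then show ?thesis by (rule LIM_zero_cancel)
qed

lemma onorm_Delta_limit_le:
  assumes xs: "\<And>n. xs n \<in> diag_alg E" and x: "x \<in> diag_alg E"
    and lim: "(\<lambda>n. onorm (opsub (xs n) x)) \<longlonglongrightarrow> 0"
    and bnd: "\<And>n. onorm (\<Delta> (xs n)) \<le> k"
  shows "onorm (\<Delta> x) \<le> k"
proof (rule onorm_le_of_weak_op_limit[OF Delta_KH[OF xs] Delta_KH[OF x] bnd])
  fix v w
  show "(\<lambda>n. cinner w (\<Delta> (xs n) v)) \<longlonglongrightarrow> cinner w (\<Delta> x v)"
    by (rule weak_op_tendsto_total_set[OF total Delta_KH[OF xs] Delta_KH[OF x], where K="max k (onorm (\<Delta> x))"])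
      (use bnd Delta_coeff_continuous[OF xs x lim] in \<open>auto simp: le_max_iff_disj\<close>)
qed

interpretation M: Metric_space "diag_alg E" op_dist by (rule Metric_space_diag_alg)

lemma mcomplete_diag_alg: "M.mcomplete"
  unfolding M.mcomplete_def
proof (intro allI impI)
  fix \<sigma> assume c: "M.MCauchy \<sigma>"
  then have \<sigma>S: "\<And>n. \<sigma> n \<in> diag_alg E" by (auto simp: M.MCauchy_def)
  have \<sigma>K: "\<sigma> n \<in> KH" for n using \<sigma>S[of n] by (rule diag_alg_KH)
  have "\<exists>x\<in>KH. (\<lambda>n. onorm (opsub (\<sigma> n) x)) \<longlonglongrightarrow> 0"
  proof (rule KH_onorm_complete[OF \<sigma>K])
    fix e :: real assume "e > 0"
    then obtain N where "\<And>n n'. N \<le> n \<Longrightarrow> N \<le> n' \<Longrightarrow> op_dist (\<sigma> n) (\<sigma> n') < e"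
      using c unfolding M.MCauchy_def by blast
    then show "\<exists>N. \<forall>m\<ge>N. \<forall>n\<ge>N. onorm (opsub (\<sigma> m) (\<sigma> n)) < e"
      using op_dist_KH[OF \<sigma>K \<sigma>K] by metis
  qed
  then obtain x where x: "x \<in> KH" "(\<lambda>n. onorm (opsub (\<sigma> n) x)) \<longlonglongrightarrow> 0" by blast
  have xS: "x \<in> diag_alg E" by (rule diag_alg_closed[OF \<sigma>S x])
  have "limitin M.mtopology \<sigma> x sequentially"
    unfolding M.limitin_metric
  proof (intro conjI allI impI xS)
    fix \<epsilon> :: real assume "\<epsilon> > 0"
    then have "\<forall>\<^sub>F n in sequentially. onorm (opsub (\<sigma> n) x) < \<epsilon>" using order_tendstoD(2)[OF x(2)] by blast
    then show "\<forall>\<^sub>F n in sequentially. \<sigma> n \<in> diag_alg E \<and> op_dist (\<sigma> n) x < \<epsilon>"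
      by eventually_elim (simp add: \<sigma>S op_dist_KH \<sigma>K x(1))
  qed
  then show "\<exists>x. limitin M.mtopology \<sigma> x sequentially" by blast
qed

definition Delta_sublevel :: "nat \<Rightarrow> ('a \<Rightarrow> 'a) set" where
  "Delta_sublevel k = {x \<in> diag_alg E. onorm (\<Delta> x) \<le> real k}"

lemma closedin_Delta_sublevel: "closedin M.mtopology (Delta_sublevel k)"
  unfolding M.metric_closedin_iff_sequentially_closed
proof (intro conjI allI impI)
  show "Delta_sublevel k \<subseteq> diag_alg E" by (auto simp: Delta_sublevel_def)
  fix \<sigma> l assume a: "range \<sigma> \<subseteq> Delta_sublevel k \<and> limitin M.mtopology \<sigma> l sequentially"
  then have \<sigma>S: "\<And>n. \<sigma> n \<in> diag_alg E" and bnd: "\<And>n. onorm (\<Delta> (\<sigma> n)) \<le> real k"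
    by (auto simp: Delta_sublevel_def)
  from a have l: "l \<in> diag_alg E" and lim: "(\<lambda>n. op_dist (\<sigma> n) l) \<longlonglongrightarrow> 0"
    unfolding M.limitin_metric_dist_null by auto
  have "(\<lambda>n. op_dist (\<sigma> n) l) = (\<lambda>n. onorm (opsub (\<sigma> n) l))"
    by (intro ext op_dist_KH diag_alg_KH[OF \<sigma>S] diag_alg_KH[OF l])
  then have "onorm (\<Delta> l) \<le> real k" using onorm_Delta_limit_le[OF \<sigma>S l _ bnd] lim by simp
  then show "l \<in> Delta_sublevel k" using l by (simp add: Delta_sublevel_def)
qed

text \<open>Baire: the closed sets \<open>Delta_sublevel k\<close> cover the complete space \<open>diag_alg E\<close>.\<close>
lemma Delta_sublevel_contains_ball:
  assumes "diag_alg E \<noteq> {}"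
  obtains k x0 r where "r > 0" "x0 \<in> diag_alg E" "M.mball x0 r \<subseteq> Delta_sublevel k"
proof -
  have "\<exists>k. M.mtopology interior_of (Delta_sublevel k) \<noteq> {}"
  proof (rule ccontr)
    assume "\<not> ?thesis"
    then have "M.mtopology interior_of \<Union>(range Delta_sublevel) = {}"
      by (intro M.metric_Baire_category_alt[OF mcomplete_diag_alg]) (auto simp: closedin_Delta_sublevel)
    moreover have "\<Union>(range Delta_sublevel) = diag_alg E"
    proof
      show "\<Union>(range Delta_sublevel) \<subseteq> diag_alg E" by (auto simp: Delta_sublevel_def)
      show "diag_alg E \<subseteq> \<Union>(range Delta_sublevel)"
      proof
        fix x assume "x \<in> diag_alg E"
        moreover have "onorm (\<Delta> x) \<le> real (nat \<lceil>onorm (\<Delta> x)\<rceil>)" by linarith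
        ultimately show "x \<in> \<Union>(range Delta_sublevel)" by (auto simp: Delta_sublevel_def)
      qed
    qed
    ultimately have "diag_alg E = {}" by (metis M.topspace_mtopology interior_of_topspace)
    then show False using assms by simp
  qed
  then obtain k x0 where x0: "x0 \<in> M.mtopology interior_of (Delta_sublevel k)" by blast
  then obtain r where r: "r > 0" "M.mball x0 r \<subseteq> M.mtopology interior_of (Delta_sublevel k)"
    using openin_interior_of[of M.mtopology "Delta_sublevel k"] unfolding M.openin_mtopology by blast
  moreover have "x0 \<in> diag_alg E"
    using x0 interior_of_subset[of M.mtopology "Delta_sublevel k"] by (auto simp: Delta_sublevel_def)
  ultimately show thesis
    using that interior_of_subset[of M.mtopology "Delta_sublevel k"] by blast
qed

text \<open>If \<open>\<parallel>\<Delta>\<parallel> \<le> k\<close> on the ball of radius \<open>r\<close> about \<open>x\<^sub>0\<close>, then by linearity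
  \<open>\<parallel>\<Delta> z\<parallel> \<le> \<parallel>\<Delta> (x\<^sub>0 + z')\<parallel> + \<parallel>\<Delta> x\<^sub>0\<parallel> \<le> 2k\<close> for \<open>z'\<close> the multiple of \<open>z\<close> of norm \<open>r/2\<close>.\<close>
lemma Delta_bounded: "\<exists>B. \<forall>z\<in>diag_alg E. onorm (\<Delta> z) \<le> B * onorm z"
proof (cases "diag_alg E = {}")
  case True then show ?thesis by auto
next
  case False
  then obtain k x0 r where r: "r > 0" and x0S: "x0 \<in> diag_alg E"
    and ball: "M.mball x0 r \<subseteq> Delta_sublevel k"
    by (rule Delta_sublevel_contains_ball)
  have "x0 \<in> Delta_sublevel k" using ball x0S r by auto
  then have x0b: "onorm (\<Delta> x0) \<le> real k" by (simp add: Delta_sublevel_def)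
  have "onorm (\<Delta> z) \<le> (4 * real k / r) * onorm z" if zS: "z \<in> diag_alg E" for z
  proof (cases "onorm z = 0")
    case True
    then have "z = opscale 0 z"
      using onorm_eq_0[OF KH_bounded_linear[OF diag_alg_KH[OF zS]]] by (simp add: opscale_def fun_eq_iff)
    then have "\<Delta> z = (\<lambda>_. 0)" using Delta_opscale[OF zS, of 0] by (simp add: opscale_def)
    then show ?thesis using True by (simp add: onorm_zero)
  next
    case False
    then have t: "onorm z > 0" using KH_onorm_nonneg[OF diag_alg_KH[OF zS]] by simp
    define s where "s = r / (2 * onorm z)"
    have s: "s > 0" using t r by (simp add: s_def)
    define z' where "z' = opscale (complex_of_real s) z"
    have z'S: "z' \<in> diag_alg E" by (simp add: z'_def diag_alg_scale zS)
    have z'eq: "z' = (\<lambda>v. s *\<^sub>R z v)" by (simp add: z'_def opscale_def scaleC_of_real)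
    have "onorm z' = s * onorm z"
      using s by (simp add: z'eq onorm_scaleR KH_bounded_linear[OF diag_alg_KH[OF zS]])
    also have "\<dots> = r / 2" using t by (simp add: s_def)
    finally have "onorm z' = r / 2" .
    moreover have "opsub x0 (opadd x0 z') = (\<lambda>v. - z' v)" by (simp add: opsub_def opadd_def fun_eq_iff)
    moreover have "opadd x0 z' \<in> diag_alg E" using x0S z'S by (rule diag_alg_add)
    ultimately have "op_dist x0 (opadd x0 z') = onorm z'"
      using x0S by (simp add: op_dist_KH diag_alg_KH onorm_neg)
    then have "op_dist x0 (opadd x0 z') < r" using \<open>onorm z' = r / 2\<close> r by simp
    then have "opadd x0 z' \<in> M.mball x0 r" using x0S z'S by (simp add: diag_alg_add)
    then have yb: "onorm (\<Delta> (opadd x0 z')) \<le> real k" using ball by (auto simp: Delta_sublevel_def)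
    have "\<Delta> (opadd x0 z') = opadd (\<Delta> x0) (\<Delta> z')" by (rule Delta_opadd[OF x0S z'S])
    then have "\<Delta> z' = (\<lambda>v. \<Delta> (opadd x0 z') v + - \<Delta> x0 v)" by (simp add: opadd_def fun_eq_iff)
    moreover have "onorm (\<lambda>v. \<Delta> (opadd x0 z') v + - \<Delta> x0 v) \<le> onorm (\<Delta> (opadd x0 z')) + onorm (\<lambda>v. - \<Delta> x0 v)"
      using x0S z'S
      by (intro onorm_triangle bounded_linear_minus KH_bounded_linear Delta_KH diag_alg_add)
    ultimately have "onorm (\<Delta> z') \<le> 2 * real k" using yb x0b by (simp add: onorm_neg)
    moreover have "\<Delta> z' = (\<lambda>v. s *\<^sub>R \<Delta> z v)"
      using Delta_opscale[OF zS, of "complex_of_real s"] by (simp add: z'_def opscale_def scaleC_of_real)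
    ultimately have "s * onorm (\<Delta> z) \<le> 2 * real k"
      using s by (simp add: onorm_scaleR KH_bounded_linear Delta_KH[OF zS])
    then have "onorm (\<Delta> z) \<le> 2 * real k / s" using s by (simp add: field_simps)
    also have "\<dots> = (4 * real k / r) * onorm z" using t r by (simp add: s_def field_simps)
    finally show ?thesis .
  qed
  then show ?thesis by blast
qed

lemma cont_lin_derivation_on_diag_alg:
  assumes C: "C \<subseteq> diag_alg E"
  shows "cont_lin_derivation_on C \<Delta>"
  unfolding cont_lin_derivation_on_def
proof
  show "derivation_into_KH C \<Delta>"
    unfolding derivation_into_KH_def lin_on_def
    using C Delta_KH Delta_opadd Delta_opscale Delta_comp by blast
  obtain B where B: "\<And>z. z \<in> diag_alg E \<Longrightarrow> onorm (\<Delta> z) \<le> B * onorm z"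
    using Delta_bounded by blast
  show "cont_on_ops C \<Delta>"
    unfolding cont_on_ops_def
  proof (intro allI impI, elim conjE)
    fix xs x assume xs: "\<forall>n. xs n \<in> C" and x: "x \<in> C" and lim: "(\<lambda>n. onorm (opsub (xs n) x)) \<longlonglongrightarrow> 0"
    have xsS: "xs n \<in> diag_alg E" for n using xs C by auto
    have xS: "x \<in> diag_alg E" using x C by auto
    show "(\<lambda>n. onorm (opsub (\<Delta> (xs n)) (\<Delta> x))) \<longlonglongrightarrow> 0"
    proof (rule tendsto_sandwich[where f="\<lambda>n. 0" and h="\<lambda>n. B * onorm (opsub (xs n) x)"])
      show "\<forall>\<^sub>F n in sequentially. 0 \<le> onorm (opsub (\<Delta> (xs n)) (\<Delta> x))"
        by (intro always_eventually allI KH_onorm_nonneg KH_opsub Delta_KH xsS xS)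
      show "\<forall>\<^sub>F n in sequentially. onorm (opsub (\<Delta> (xs n)) (\<Delta> x)) \<le> B * onorm (opsub (xs n) x)"
        by (intro always_eventually allI) (use B[OF diag_alg_sub[OF xsS xS]] Delta_opsub[OF xsS xS] in simp)
      show "(\<lambda>n. 0) \<longlonglongrightarrow> (0::real)" by simp
      show "(\<lambda>n. B * onorm (opsub (xs n) x)) \<longlonglongrightarrow> 0" using tendsto_mult[OF tendsto_const lim, of B] by simp
    qed
  qed
qed

end

section \<open>Eigenvectors of a compact self-adjoint operator are total\<close>

lemma self_adjoint_square_defect:
  fixes a :: "'a::complex_inner \<Rightarrow> 'a"
  assumes adj: "is_adjoint a a" and y: "norm y = 1"
    and aay: "norm (a (a y)) \<le> s * norm (a y)" and s: "0 \<le> s"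
  shows "(norm (a (a y) - s\<^sup>2 *\<^sub>R y))\<^sup>2 \<le> s\<^sup>2 * (s\<^sup>2 - (norm (a y))\<^sup>2)"
proof -
  have "cinner (a (a y)) y = cinner (a y) (a y)" using adj by (simp add: is_adjoint_def)
  then have "(norm (a (a y) - s\<^sup>2 *\<^sub>R y))\<^sup>2 = (norm (a (a y)))\<^sup>2 + (s\<^sup>2)\<^sup>2 - 2 * s\<^sup>2 * (norm (a y))\<^sup>2"
    using y by (simp add: power2_norm_diff cinner_scaleR_right power2_norm_eq_Re_cinner[symmetric]
        power_mult_distrib)
  also have "\<dots> \<le> (s * norm (a y))\<^sup>2 + (s\<^sup>2)\<^sup>2 - 2 * s\<^sup>2 * (norm (a y))\<^sup>2"
    using aay by (simp add: power_mono)
  also have "\<dots> = s\<^sup>2 * (s\<^sup>2 - (norm (a y))\<^sup>2)" by (simp add: algebra_simps power2_eq_square)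
  finally show ?thesis .
qed

text \<open>If \<open>a\<^sup>2 v = s\<^sup>2 v\<close>, then either \<open>a v + s v\<close> is an eigenvector for \<open>s\<close> or \<open>v\<close> is one for \<open>-s\<close>.\<close>
lemma eigenvector_of_square_eigenvector:
  assumes cl: "clinear a" and M: "csubspace M" "\<And>y. y \<in> M \<Longrightarrow> a y \<in> M"
    and v: "v \<in> M" "v \<noteq> 0" and aav: "a (a v) = s\<^sup>2 *\<^sub>R v"
  obtains w where "w \<in> M" "w \<noteq> 0" "\<exists>l. a w = l *\<^sub>C w"
proof (cases "a v + s *\<^sub>R v = 0")
  case True
  then have "a v = (- complex_of_real s) *\<^sub>C v"
    by (simp add: scaleC_minus_left scaleC_of_real eq_neg_iff_add_eq_0)
  then show thesis using that v by blast
next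
  case False
  have "a (a v + s *\<^sub>R v) = a (a v) + s *\<^sub>R a v" by (simp add: clinear_add[OF cl] clinear_scaleR[OF cl])
  also have "\<dots> = complex_of_real s *\<^sub>C (a v + s *\<^sub>R v)"
    by (simp add: aav power2_eq_square scaleR_add_right scaleC_of_real)
  finally have "\<exists>l. a (a v + s *\<^sub>R v) = l *\<^sub>C (a v + s *\<^sub>R v)" by blast
  moreover have "a v + s *\<^sub>R v \<in> M" using M v by (auto simp: csubspace_def csubspace_scaleR)
  ultimately show thesis using that False by blast
qed

text \<open>A sequence of unit vectors with \<open>a\<^sup>2 z\<^sub>n - s\<^sup>2 z\<^sub>n \<rightarrow> 0\<close> has, by compactness of \<open>a\<close>, a
  subsequence along which \<open>a z\<^sub>n\<close> and hence \<open>z\<^sub>n = s\<^sup>-\<^sup>2 a (a z\<^sub>n) + o(1)\<close> converge.\<close>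
lemma compact_op_square_eigenvector:
  assumes aK: "a \<in> KH" and M: "closed M"
    and zs: "\<And>n. zs n \<in> M" "\<And>n. norm (zs n) = 1"
    and err: "(\<lambda>n. a (a (zs n)) - s\<^sup>2 *\<^sub>R zs n) \<longlonglongrightarrow> 0" and s: "s > 0"
  obtains v where "v \<in> M" "norm v = 1" "a (a v) = s\<^sup>2 *\<^sub>R v"
proof -
  have cl: "clinear a" and bl: "bounded_linear a" using aK by (simp_all add: KH_clinear KH_bounded_linear)
  have "a ((1/2) *\<^sub>R zs n) \<in> closure (a ` ball 0 1)" for n
    using zs(2)[of n] by (intro closure_subset[THEN subsetD] imageI) simp
  then obtain y' r where r: "strict_mono r" "((\<lambda>n. a ((1/2) *\<^sub>R zs n)) \<circ> r) \<longlonglongrightarrow> y'"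
    using seq_compactE[OF compact_imp_seq_compact[OF KH_compact[OF aK]]] by metis
  define y where "y = 2 *\<^sub>R y'"
  have "(\<lambda>k. 2 *\<^sub>R a ((1/2) *\<^sub>R zs (r k))) \<longlonglongrightarrow> y"
    using r(2) unfolding y_def by (intro tendsto_scaleR tendsto_const) (simp add: comp_def)
  then have ay: "(\<lambda>k. a (zs (r k))) \<longlonglongrightarrow> y" by (simp add: clinear_scaleR[OF cl])
  have "(\<lambda>k. a (a (zs (r k))) - (a (a (zs (r k))) - s\<^sup>2 *\<^sub>R zs (r k))) \<longlonglongrightarrow> a y - 0"
    using LIMSEQ_subseq_LIMSEQ[OF err r(1)]
    by (intro tendsto_diff bounded_linear.tendsto[OF bl ay]) (simp add: comp_def)
  then have "(\<lambda>k. (1 / s\<^sup>2) *\<^sub>R (s\<^sup>2 *\<^sub>R zs (r k))) \<longlonglongrightarrow> (1 / s\<^sup>2) *\<^sub>R a y"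
    by (intro tendsto_scaleR tendsto_const) simp
  then have zlim: "(\<lambda>k. zs (r k)) \<longlonglongrightarrow> (1 / s\<^sup>2) *\<^sub>R a y" using s by simp
  define v where "v = (1 / s\<^sup>2) *\<^sub>R a y"
  have "(\<lambda>k. norm (zs (r k))) \<longlonglongrightarrow> norm v" unfolding v_def by (intro tendsto_norm zlim)
  then have "(\<lambda>k. 1::real) \<longlonglongrightarrow> norm v" using zs(2) by simp
  then have "norm v = 1" using LIMSEQ_unique[OF tendsto_const] by metis
  moreover have "v \<in> M" unfolding v_def using closed_sequentially[OF M _ zlim] zs(1) by blast
  moreover have "a v = y"
    using bounded_linear.tendsto[OF bl zlim] ay LIMSEQ_unique unfolding v_def by blast
  then have "a (a v) = s\<^sup>2 *\<^sub>R v"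
    using s by (simp add: v_def)
  ultimately show thesis using that by blast
qed

lemma norm_on_subspace_approx:
  fixes a :: "'a::complex_normed_vector \<Rightarrow> 'a"
  assumes cl: "clinear a" and bl: "bounded_linear a" and M: "csubspace M" and z: "z \<in> M" "z \<noteq> 0"
  obtains s where "0 \<le> s" "\<And>y. y \<in> M \<Longrightarrow> norm (a y) \<le> s * norm y"
    "\<And>n. \<exists>y. y \<in> M \<and> norm y = 1 \<and> s - 1 / real (Suc n) < norm (a y)"
proof -
  define S where "S = {norm (a y) | y. y \<in> M \<and> norm y = 1}"
  define s where "s = Sup S"
  have u0: "(1 / norm z) *\<^sub>R z \<in> M \<and> norm ((1 / norm z) *\<^sub>R z) = 1"
    using z M by (simp add: csubspace_scaleR)
  have Sne: "S \<noteq> {}" using u0 by (auto simp: S_def)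
  have Sbdd: "bdd_above S"
  proof (rule bdd_aboveI[where M="onorm a"])
    fix x assume "x \<in> S"
    then obtain y where "x = norm (a y)" "norm y = 1" by (auto simp: S_def)
    then show "x \<le> onorm a" using onorm[OF bl, of y] by simp
  qed
  have Sup_ge: "norm (a y) \<le> s" if "y \<in> M" "norm y = 1" for y
    unfolding s_def using that Sbdd by (intro cSup_upper) (auto simp: S_def)
  show thesis
  proof (rule that)
    show "0 \<le> s" using Sup_ge u0 by (meson norm_ge_zero order_trans)
    show "norm (a y) \<le> s * norm y" if "y \<in> M" for y
    proof (cases "y = 0")
      case True then show ?thesis using cl by (simp add: clinear_0)
    next
      case False
      have "norm (a ((1 / norm y) *\<^sub>R y)) \<le> s"
        using False that M by (intro Sup_ge) (auto simp: csubspace_scaleR)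
      then show ?thesis using False by (simp add: clinear_scaleR[OF cl] divide_le_eq mult.commute)
    qed
    show "\<exists>y. y \<in> M \<and> norm y = 1 \<and> s - 1 / real (Suc n) < norm (a y)" for n
    proof -
      have "s - 1 / real (Suc n) < Sup S" by (simp add: s_def)
      then show ?thesis using less_cSup_iff[OF Sne Sbdd] by (auto simp: S_def)
    qed
  qed
qed

text \<open>Take \<open>s\<close> the norm of \<open>a\<close> restricted to \<open>M\<close>: unit vectors \<open>z\<^sub>n \<in> M\<close> with
  \<open>\<parallel>a z\<^sub>n\<parallel> \<rightarrow> s\<close> satisfy \<open>a\<^sup>2 z\<^sub>n - s\<^sup>2 z\<^sub>n \<rightarrow> 0\<close> by the previous estimate.\<close>
lemma compact_self_adjoint_invariant_subspace_eigenvector: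
  assumes aK: "a \<in> KH" and sa: "is_adjoint a a"
    and M: "csubspace M" "closed M" "\<And>y. y \<in> M \<Longrightarrow> a y \<in> M"
    and z: "z \<in> M" "z \<noteq> 0"
  obtains w where "w \<in> M" "w \<noteq> 0" "\<exists>l. a w = l *\<^sub>C w"
proof -
  have cl: "clinear a" and bl: "bounded_linear a" using aK by (simp_all add: KH_clinear KH_bounded_linear)
  obtain s where s0: "0 \<le> s" and bnd: "\<And>y. y \<in> M \<Longrightarrow> norm (a y) \<le> s * norm y"
    and approx: "\<And>n. \<exists>y. y \<in> M \<and> norm y = 1 \<and> s - 1 / real (Suc n) < norm (a y)"
    using norm_on_subspace_approx[OF cl bl M(1) z] by blast
  show thesis
  proof (cases "s = 0")
    case True
    then have "a z = 0 *\<^sub>C z" using bnd[OF z(1)] by simp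
    then show thesis using that z by blast
  next
    case False
    then have sp: "s > 0" using s0 by simp
    from approx obtain zs where zs: "\<And>n. zs n \<in> M" "\<And>n. norm (zs n) = 1"
      "\<And>n. s - 1 / real (Suc n) < norm (a (zs n))"
      by metis
    have sq: "(norm (a (a (zs n)) - s\<^sup>2 *\<^sub>R zs n))\<^sup>2 \<le> 2 * s^3 * (1 / real (Suc n))" for n
    proof -
      let ?t = "norm (a (zs n))"
      have "?t \<le> s" using bnd[OF zs(1)] zs(2) by simp
      have "(norm (a (a (zs n)) - s\<^sup>2 *\<^sub>R zs n))\<^sup>2 \<le> s\<^sup>2 * (s\<^sup>2 - ?t\<^sup>2)"
        by (rule self_adjoint_square_defect[OF sa zs(2) bnd[OF M(3)[OF zs(1)]] s0])
      also have "\<dots> = s\<^sup>2 * ((s - ?t) * (s + ?t))" by (simp add: algebra_simps power2_eq_square)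
      also have "\<dots> \<le> s\<^sup>2 * ((1 / real (Suc n)) * (2 * s))"
      proof (intro mult_left_mono mult_mono)
        show "s - ?t \<le> 1 / real (Suc n)" using zs(3)[of n] by linarith
        show "s + ?t \<le> 2 * s" using \<open>?t \<le> s\<close> by linarith
        show "0 \<le> s + ?t" using s0 by simp
      qed simp_all
      also have "\<dots> = 2 * s^3 * (1 / real (Suc n))"
        by (simp add: power2_eq_square power3_eq_cube algebra_simps)
      finally show ?thesis .
    qed
    have lim0: "(\<lambda>n. 2 * s^3 * (1 / real (Suc n))) \<longlonglongrightarrow> 0"
      using tendsto_mult[OF tendsto_const LIMSEQ_inverse_real_of_nat, of "2 * s^3"]
      by (simp add: inverse_eq_divide)
    have "(\<lambda>n. (norm (a (a (zs n)) - s\<^sup>2 *\<^sub>R zs n))\<^sup>2) \<longlonglongrightarrow> 0"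
      by (rule tendsto_sandwich[OF _ _ tendsto_const lim0]) (simp, intro always_eventually allI sq)
    then have "(\<lambda>n. sqrt ((norm (a (a (zs n)) - s\<^sup>2 *\<^sub>R zs n))\<^sup>2)) \<longlonglongrightarrow> sqrt 0"
      by (rule tendsto_real_sqrt)
    then have "(\<lambda>n. a (a (zs n)) - s\<^sup>2 *\<^sub>R zs n) \<longlonglongrightarrow> 0"
      by (simp add: tendsto_norm_zero_iff)
    then obtain v where v: "v \<in> M" "norm v = 1" "a (a v) = s\<^sup>2 *\<^sub>R v"
      using compact_op_square_eigenvector[of a M zs s] aK M(2) zs(1,2) sp by blast
    have "v \<noteq> 0" using v(2) by auto
    then show thesis
      using eigenvector_of_square_eigenvector[OF cl M(1,3) v(1) _ v(3)] that by blast
  qed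
qed

text \<open>The orthogonal complement of the eigenvectors is a closed invariant subspace
  containing no eigenvector but \<open>0\<close>.\<close>
lemma total_set_eigenvectors:
  fixes a :: "'a::chilbert_space \<Rightarrow> 'a"
  assumes aK: "a \<in> KH" and sa: "self_adjoint a"
  shows "total_set {e. \<exists>l. a e = l *\<^sub>C e}"
  unfolding total_set_def
proof (intro allI impI)
  let ?EV = "{e. \<exists>l. a e = l *\<^sub>C e}"
  define M where "M = {y. \<forall>e\<in>?EV. cinner e y = 0}"
  fix z assume "\<forall>e\<in>?EV. cinner e z = 0"
  then have zM: "z \<in> M" by (simp add: M_def)
  have adj: "is_adjoint a a" using sa by (simp add: self_adjoint_def)
  have sub: "csubspace M" unfolding csubspace_def M_def by (simp add: cinner_add_right cinner_scaleC_right)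
  have closed: "closed M"
  proof -
    have "M = (\<Inter>e\<in>?EV. {y. cinner e y = 0})" by (auto simp: M_def)
    moreover have "closed {y. cinner e y = 0}" for e
      by (intro closed_kernel bounded_linear_cinner_right)
    ultimately show ?thesis by (auto intro!: closed_INT)
  qed
  have inv: "a y \<in> M" if "y \<in> M" for y
  proof -
    have "cinner e (a y) = 0" if "e \<in> ?EV" for e
    proof -
      obtain l where l: "a e = l *\<^sub>C e" using \<open>e \<in> ?EV\<close> by blast
      have "cinner e (a y) = cinner (a e) y" using adj by (simp add: is_adjoint_def)
      also have "\<dots> = cnj l * cinner e y" by (simp add: l cinner_scaleC_left)
      finally show ?thesis using \<open>y \<in> M\<close> that by (simp add: M_def)
    qed
    then show ?thesis by (simp add: M_def)
  qed
  show "z = 0"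
  proof (rule ccontr)
    assume "z \<noteq> 0"
    then obtain w where w: "w \<in> M" "w \<noteq> 0" "w \<in> ?EV"
      using compact_self_adjoint_invariant_subspace_eigenvector[OF aK adj sub closed inv zM] by blast
    then have "cinner w w = 0" unfolding M_def by blast
    then show False using w(2) by simp
  qed
qed

section \<open>The two algebras of the theorem\<close>

lemma self_adjoint_in_diag_alg:
  "x \<in> KH \<Longrightarrow> is_adjoint x x \<Longrightarrow> (\<And>e. e \<in> E \<Longrightarrow> eigvec x e) \<Longrightarrow> x \<in> diag_alg E"
  unfolding diag_alg_def by blast

lemma cont_lin_derivation_on_cstar_gen_self_adjoint:
  fixes \<Delta> :: "('a::chilbert_space \<Rightarrow> 'a) \<Rightarrow> ('a \<Rightarrow> 'a)"
  assumes aK: "a \<in> KH" and sa: "self_adjoint a" and W: "weak_2_local_derivation \<Delta>"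
  shows "cont_lin_derivation_on (cstar_gen {a}) \<Delta>"
proof -
  let ?E = "{e. \<exists>l. a e = l *\<^sub>C e}"
  have "a \<in> diag_alg ?E"
    using aK sa by (intro self_adjoint_in_diag_alg) (auto simp: self_adjoint_def eigvec_def)
  then have "cstar_gen {a} \<subseteq> diag_alg ?E" by (intro cstar_gen_subset_diag_alg) simp
  then show ?thesis
    by (rule cont_lin_derivation_on_diag_alg[OF W total_set_eigenvectors[OF aK sa]])
qed

lemma projection_KH_eq_zero_of_cinner:
  assumes p: "projection_KH p" and z: "cinner (p z) z = 0"
  shows "p z = 0"
proof -
  have "cinner (p z) (p z) = cinner z (p (p z))"
    using p by (simp add: projection_KH_def self_adjoint_def is_adjoint_def)
  also have "\<dots> = cnj (cinner (p z) z)"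
    using p by (metis cinner_commute comp_apply projection_KH_def)
  finally show ?thesis using z by simp
qed

lemma total_set_ranges_common_kernel:
  assumes P: "\<And>p. p \<in> P \<Longrightarrow> projection_KH p"
  shows "total_set ((\<Union>p\<in>P. range p) \<union> {e. \<forall>p\<in>P. p e = 0})"
  unfolding total_set_def
proof (intro allI impI)
  fix z assume z: "\<forall>e\<in>(\<Union>p\<in>P. range p) \<union> {e. \<forall>p\<in>P. p e = 0}. cinner e z = 0"
  then have "\<forall>p\<in>P. p z = 0" using projection_KH_eq_zero_of_cinner[OF P] by blast
  then show "z = 0" using z cinner_self_eq_0 by blast
qed

lemma orthogonal_projection_in_diag_alg:
  assumes P: "\<And>p. p \<in> P \<Longrightarrow> projection_KH p"
    and orth: "\<And>p q. p \<in> P \<Longrightarrow> q \<in> P \<Longrightarrow> p \<noteq> q \<Longrightarrow> p \<circ> q = (\<lambda>_. 0)"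
    and p: "p \<in> P"
  shows "p \<in> diag_alg ((\<Union>p\<in>P. range p) \<union> {e. \<forall>p\<in>P. p e = 0})"
proof (rule self_adjoint_in_diag_alg)
  show "p \<in> KH" "is_adjoint p p" using P[OF p] by (simp_all add: projection_KH_def self_adjoint_def)
  fix e assume "e \<in> (\<Union>p\<in>P. range p) \<union> {e. \<forall>p\<in>P. p e = 0}"
  then consider q v where "q \<in> P" "e = q v" | "p e = 0" using p by auto
  then show "eigvec p e"
  proof cases
    case (1 q v)
    then have "p e = (if p = q then 1 else 0) *\<^sub>C e"
      using orth[OF p 1(1)] P[OF p] by (auto simp: projection_KH_def scaleC_one fun_eq_iff)
    then show ?thesis unfolding eigvec_def by blast
  next
    case 2
    then show ?thesis unfolding eigvec_def by (metis scaleC_zero_left)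
  qed
qed

lemma cont_lin_derivation_on_cstar_gen_orthogonal_projections:
  fixes \<Delta> :: "('a::chilbert_space \<Rightarrow> 'a) \<Rightarrow> ('a \<Rightarrow> 'a)"
  assumes W: "weak_2_local_derivation \<Delta>"
    and P: "\<And>p. p \<in> P \<Longrightarrow> projection_KH p"
    and orth: "\<And>p q. p \<in> P \<Longrightarrow> q \<in> P \<Longrightarrow> p \<noteq> q \<Longrightarrow> p \<circ> q = (\<lambda>_. 0)"
  shows "cont_lin_derivation_on (cstar_gen P) \<Delta>"
proof -
  let ?E = "(\<Union>p\<in>P. range p) \<union> {e. \<forall>p\<in>P. p e = 0}"
  have "cstar_gen P \<subseteq> diag_alg ?E"
    using orthogonal_projection_in_diag_alg[OF P orth] by (intro cstar_gen_subset_diag_alg) blast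
  with W total_set_ranges_common_kernel[OF P] show ?thesis
    by (rule cont_lin_derivation_on_diag_alg)
qed

theorem theorem3p7:
  fixes \<Delta> :: "('a::chilbert_space \<Rightarrow> 'a) \<Rightarrow> ('a \<Rightarrow> 'a)"
    and a :: "'a \<Rightarrow> 'a"
  assumes "a \<in> KH" and "self_adjoint a"
    and "weak_2_local_derivation \<Delta>"
  shows "cont_lin_derivation_on (cstar_gen {a}) \<Delta>
    \<and> (\<forall>P. countable P \<and> (\<forall>p\<in>P. minimal_projection_KH p)
          \<and> (\<forall>p\<in>P. \<forall>q\<in>P. p \<noteq> q \<longrightarrow> p \<circ> q = (\<lambda>_. 0))
          \<longrightarrow> cont_lin_derivation_on (cstar_gen P) \<Delta>)"
proof (intro conjI allI impI)
  show "cont_lin_derivation_on (cstar_gen {a}) \<Delta>"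
    by (rule cont_lin_derivation_on_cstar_gen_self_adjoint[OF assms])
  fix P :: "('a \<Rightarrow> 'a) set"
  assume "countable P \<and> (\<forall>p\<in>P. minimal_projection_KH p)
    \<and> (\<forall>p\<in>P. \<forall>q\<in>P. p \<noteq> q \<longrightarrow> p \<circ> q = (\<lambda>_. 0))"
  then show "cont_lin_derivation_on (cstar_gen P) \<Delta>"
    by (intro cont_lin_derivation_on_cstar_gen_orthogonal_projections[OF assms(3)])
      (auto simp: minimal_projection_KH_def)
qed

end
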